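(* Let $X=[0,\infty)\subset\mathbb{R}$ and $\mathcal{A}=\{\alpha_1,\dots,\alpha_m\}\subset\mathbb{R}$ with $\alpha_1<\cdots<\alpha_m$. The extreme rays of $C_{[0,\infty)}(\mathcal{A})$ are exactly the rays $\{tf:t\ge0\}$ generated by the following functions of $x\in\mathbb{R}$: (1) $f(x)=\exp(\alpha_1x)$; (2) $f(x)=\exp(\alpha_2x)-\exp(\alpha_1x)$ (when $m\ge2$); (3) for each $2\le i\le m-1$, $f(x)=c_{i+1}\exp(\alpha_{i+1}x)+c_i\exp(\alpha_ix)+c_{i-1}\exp(\alpha_{i-1}x)$ with $c_{i+1}>0$, $c_{i-1}>0$ and \[c_i=-\Big(\frac{c_{i-1}}{\lambda_{i-1}}\Big)^{\lambda_{i-1}}\Big(\frac{c_{i+1}}{\lambda_{i+1}}\Big)^{\lambda_{i+1}},\qquad \lambda_{i+1}=\frac{\alpha_i-\alpha_{i-1}}{\alpha_{i+1}-\alpha_{i-1}},\quad \lambda_{i-1}=\frac{\alpha_{i+1}-\alpha_i}{\alpha_{i+1}-\alpha_{i-1}},\] subject to $\dfrac{c_{i-1}}{c_{i+1}}\ge\dfrac{\lambda_{i-1}}{\lambda_{i+1}}$.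
   Context: Signomials supported on a finite set $\mathcal{A}\subset\mathbb{R}$ are functions $f(x)=\sum_{\alpha\in\mathcal{A}}c_\alpha\exp(\alpha x)$, identified with coefficient vectors $c\in\mathbb{R}^{\mathcal{A}}$. For $X\subset\mathbb{R}$ and $\beta\in\mathcal{A}$, the $X$-AGE cone $C_X(\mathcal{A},\beta)$ is the set of signomials supported on $\mathcal{A}$ that are nonnegative on $X$ and have $c_\alpha\ge0$ for all $\alpha\ne\beta$; the $X$-SAGE cone is the Minkowski sum $C_X(\mathcal{A})=\sum_{\beta\in\mathcal{A}}C_X(\mathcal{A},\beta)$. *)

theory Defs
  imports "HOL-Analysis.Analysis"
begin

text \<open>Signomials supported on a finite set A of reals are identified with their
coefficient vectors c :: real \<Rightarrow> real, required to vanish outside A.\<close>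

definition supported_on :: "real set \<Rightarrow> (real \<Rightarrow> real) \<Rightarrow> bool" where
  "supported_on A c \<longleftrightarrow> (\<forall>a. a \<notin> A \<longrightarrow> c a = 0)"

definition signomial :: "real set \<Rightarrow> (real \<Rightarrow> real) \<Rightarrow> real \<Rightarrow> real" where
  "signomial A c x = (\<Sum>a\<in>A. c a * exp (a * x))"

definition AGE_cone :: "real set \<Rightarrow> real set \<Rightarrow> real \<Rightarrow> (real \<Rightarrow> real) set" where
  "AGE_cone X A \<beta> = {c. supported_on A c \<and> (\<forall>x\<in>X. signomial A c x \<ge> 0)
                        \<and> (\<forall>a\<in>A. a \<noteq> \<beta> \<longrightarrow> c a \<ge> 0)}"

definition SAGE_cone :: "real set \<Rightarrow> real set \<Rightarrow> (real \<Rightarrow> real) set" where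
  "SAGE_cone X A = {c. \<exists>g. (\<forall>\<beta>\<in>A. g \<beta> \<in> AGE_cone X A \<beta>) \<and> c = (\<lambda>a. \<Sum>\<beta>\<in>A. g \<beta> a)}"

definition extreme_ray :: "(real \<Rightarrow> real) set \<Rightarrow> (real \<Rightarrow> real) \<Rightarrow> bool" where
  "extreme_ray K c \<longleftrightarrow> c \<in> K \<and> c \<noteq> (\<lambda>_. 0) \<and>
     (\<forall>g h. g \<in> K \<and> h \<in> K \<and> c = (\<lambda>a. g a + h a) \<longrightarrow>
        (\<exists>s\<ge>0. g = (\<lambda>a. s * c a)) \<and> (\<exists>s\<ge>0. h = (\<lambda>a. s * c a)))"

end

theory Submission
  imports Defs
begin

text \<open>
  The SAGE cone is a Minkowski sum of AGE cones, so every extreme ray lies in a single AGE cone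
  C(A, \<beta>). For a signomial f whose coefficients other than c_\<beta> are nonnegative, the
  termwise bound exp y \<ge> 1 + y gives the tangent estimate
  f x \<ge> exp (\<beta> (x - x0)) (f x0 + (x - x0) (f' x0 - \<beta> f x0)); in particular a double root
  of f certifies nonnegativity. An extreme AGE signomial with c_\<beta> \<ge> 0 is a monomial,
  necessarily at the smallest exponent. If c_\<beta> < 0, minimising f x \<cdot> exp (-\<beta> x) shows
  that f has a root x0 \<ge> 0, and splitting off binomials and circuits (trinomials with a double
  root) shows that either x0 = 0 is a simple root and f is a multiple of
  exp (\<alpha>_2 x) - exp (\<alpha>_1 x), or x0 is a double root and f is supported on three
  consecutive exponents. Solving the double root equations by weighted AM-GM gives the closed
  form of c_i, and x0 \<ge> 0 becomes c_(i-1) / c_(i+1) \<ge> \<lambda>_(i-1) / \<lambda>_(i+1).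
  Conversely, the pieces of any AGE decomposition of such a generator inherit its roots and
  its support, hence are multiples of it.
\<close>

section \<open>Signomials and their derivative\<close>

definition signomial_deriv :: "real set \<Rightarrow> (real \<Rightarrow> real) \<Rightarrow> real \<Rightarrow> real" where
  "signomial_deriv A c x = (\<Sum>a\<in>A. c a * a * exp (a * x))"

lemma signomial_diff: "signomial A (\<lambda>a. c a - d a) x = signomial A c x - signomial A d x"
  by (simp add: signomial_def left_diff_distrib sum_subtractf)

lemma signomial_cmult: "signomial A (\<lambda>a. s * c a) x = s * signomial A c x"
  by (simp add: signomial_def sum_distrib_left mult.assoc)

lemma signomial_sum: "signomial A (\<lambda>a. \<Sum>i\<in>I. p i a) x = (\<Sum>i\<in>I. signomial A (p i) x)"
  by (simp add: signomial_def sum_distrib_right sum.swap[of _ I])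

lemma signomial_deriv_diff:
  "signomial_deriv A (\<lambda>a. c a - d a) x = signomial_deriv A c x - signomial_deriv A d x"
  by (simp add: signomial_deriv_def left_diff_distrib sum_subtractf)

lemma signomial_deriv_cmult: "signomial_deriv A (\<lambda>a. s * c a) x = s * signomial_deriv A c x"
  by (simp add: signomial_deriv_def sum_distrib_left mult.assoc)

lemma signomial_deriv_sum:
  "signomial_deriv A (\<lambda>a. \<Sum>i\<in>I. p i a) x = (\<Sum>i\<in>I. signomial_deriv A (p i) x)"
  by (simp add: signomial_deriv_def sum_distrib_right sum.swap[of _ I])

lemma signomial_supported_subset:
  assumes "finite A" "S \<subseteq> A" "supported_on S c"
  shows "signomial A c x = signomial S c x" "signomial_deriv A c x = signomial_deriv S c x"
  using assms by (auto simp: signomial_def signomial_deriv_def supported_on_def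
      intro!: sum.mono_neutral_right)

lemma has_real_derivative_signomial:
  "(signomial A c has_real_derivative signomial_deriv A c x) (at x)"
  unfolding signomial_def signomial_deriv_def
  by (auto intro!: derivative_eq_intros simp: algebra_simps)

lemma continuous_on_signomial: "continuous_on S (signomial A c)"
  unfolding signomial_def by (intro continuous_intros)

lemma signomial_deriv_minus_shift:
  "signomial_deriv A c x - \<beta> * signomial A c x = (\<Sum>a\<in>A. c a * (a - \<beta>) * exp (a * x))"
  by (simp add: signomial_deriv_def signomial_def sum_distrib_left sum_subtractf[symmetric]
      algebra_simps)

section \<open>Nonnegative signomials on the half-line\<close>

lemma AGE_signomial_ge_tangent:
  assumes "\<And>a. a \<in> A \<Longrightarrow> a \<noteq> \<beta> \<Longrightarrow> c a \<ge> 0"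
  shows "signomial A c x \<ge> exp (\<beta> * (x - x0)) *
           (signomial A c x0 + (x - x0) * (signomial_deriv A c x0 - \<beta> * signomial A c x0))"
proof -
  have "exp (\<beta> * (x - x0)) *
          (signomial A c x0 + (x - x0) * (signomial_deriv A c x0 - \<beta> * signomial A c x0))
      = (\<Sum>a\<in>A. c a * exp (a * x0) * exp (\<beta> * (x - x0)) * (1 + (a - \<beta>) * (x - x0)))"
    unfolding signomial_deriv_minus_shift
    by (simp add: signomial_def sum_distrib_left sum_distrib_right sum.distrib[symmetric]
        algebra_simps)
  also have "\<dots> \<le> (\<Sum>a\<in>A. c a * exp (a * x))"
  proof (rule sum_mono)
    fix a assume a: "a \<in> A"
    have e: "exp (a * x) = exp (a * x0) * exp (\<beta> * (x - x0)) * exp ((a - \<beta>) * (x - x0))"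
      by (simp add: exp_add[symmetric] algebra_simps)
    show "c a * exp (a * x0) * exp (\<beta> * (x - x0)) * (1 + (a - \<beta>) * (x - x0)) \<le> c a * exp (a * x)"
    proof (cases "a = \<beta>")
      case True
      then show ?thesis by (simp add: exp_add[symmetric] algebra_simps)
    next
      case False
      have "0 \<le> c a * exp (a * x0) * exp (\<beta> * (x - x0))"
        using assms[OF a False] by simp
      from mult_left_mono[OF exp_ge_add_one_self this, of "(a - \<beta>) * (x - x0)"]
      show ?thesis by (simp add: e mult.assoc)
    qed
  qed
  finally show ?thesis by (simp add: signomial_def)
qed

lemma AGE_signomial_nonneg_of_double_root:
  assumes "\<And>a. a \<in> A \<Longrightarrow> a \<noteq> \<beta> \<Longrightarrow> c a \<ge> 0"
    and "signomial A c x0 = 0" "signomial_deriv A c x0 = 0"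
  shows "signomial A c x \<ge> 0"
  using AGE_signomial_ge_tangent[of A \<beta> c x x0] assms by simp

lemma AGE_signomial_nonneg_right:
  assumes "\<And>a. a \<in> A \<Longrightarrow> a \<noteq> \<beta> \<Longrightarrow> c a \<ge> 0" "signomial A c x0 \<ge> 0"
    and "signomial_deriv A c x0 - \<beta> * signomial A c x0 \<ge> 0" "x \<ge> x0"
  shows "signomial A c x \<ge> 0"
proof -
  have "0 \<le> exp (\<beta> * (x - x0)) *
          (signomial A c x0 + (x - x0) * (signomial_deriv A c x0 - \<beta> * signomial A c x0))"
    using assms by (intro mult_nonneg_nonneg add_nonneg_nonneg) auto
  with AGE_signomial_ge_tangent[of A \<beta> c x x0, OF assms(1)] show ?thesis
    by linarith
qed

lemma signomial_deriv_nonneg_at_left_root: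
  assumes "\<And>x. x \<ge> x0 \<Longrightarrow> signomial A c x \<ge> 0" "signomial A c x0 = 0"
  shows "signomial_deriv A c x0 \<ge> 0"
proof (rule ccontr)
  assume "\<not> signomial_deriv A c x0 \<ge> 0"
  with DERIV_neg_dec_right[OF has_real_derivative_signomial] obtain d where
    "d > 0" "\<And>h. h > 0 \<Longrightarrow> h < d \<Longrightarrow> signomial A c (x0 + h) < signomial A c x0"
    by (metis not_le)
  then have "signomial A c (x0 + d/2) < 0" using assms(2) by simp
  with assms(1)[of "x0 + d/2"] \<open>d > 0\<close> show False by simp
qed

lemma signomial_deriv_zero_at_interior_root:
  assumes "\<And>x. x \<ge> 0 \<Longrightarrow> signomial A c x \<ge> 0" "signomial A c x0 = 0" "x0 > 0"
  shows "signomial_deriv A c x0 = 0"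
  using DERIV_local_min[OF has_real_derivative_signomial \<open>x0 > 0\<close>] assms by force

lemma signomial_times_exp_tendsto_top_coeff:
  assumes "finite A" "M \<in> A" "\<And>a. a \<in> A \<Longrightarrow> a > M \<Longrightarrow> c a = 0"
  shows "((\<lambda>x. signomial A c x * exp (- M * x)) \<longlongrightarrow> c M) at_top"
proof -
  have "((\<lambda>x. c a * exp ((a - M) * x)) \<longlongrightarrow> (if a = M then c M else 0)) at_top"
    if "a \<in> A" for a
  proof (cases "a < M")
    case True
    have "filterlim (\<lambda>x. (a - M) * x) at_bot at_top"
      using True by (auto intro!: filterlim_tendsto_neg_mult_at_bot filterlim_ident)
    from tendsto_mult_right_zero[OF filterlim_compose[OF exp_at_bot this]]
    show ?thesis using True by (simp add: o_def)
  next
    case False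
    then show ?thesis using assms(3)[OF that] by (cases "a = M") auto
  qed
  then have "((\<lambda>x. \<Sum>a\<in>A. c a * exp ((a - M) * x)) \<longlongrightarrow> (\<Sum>a\<in>A. if a = M then c M else 0)) at_top"
    by (rule tendsto_sum)
  moreover have "signomial A c x * exp (- M * x) = (\<Sum>a\<in>A. c a * exp ((a - M) * x))" for x
  proof -
    have "exp (a * x) * exp (- M * x) = exp ((a - M) * x)" for a
      by (simp add: exp_add[symmetric] algebra_simps)
    then show ?thesis by (simp add: signomial_def sum_distrib_right mult.assoc)
  qed
  ultimately show ?thesis using assms(1,2) by simp
qed

lemma signomial_eventually_pos:
  assumes "finite A" "M \<in> A" "\<And>a. a \<in> A \<Longrightarrow> a > M \<Longrightarrow> c a = 0" "c M > 0"
  shows "eventually (\<lambda>x. signomial A c x > 0) at_top"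
proof -
  have "eventually (\<lambda>x. signomial A c x * exp (- M * x) > 0) at_top"
    using signomial_times_exp_tendsto_top_coeff[OF assms(1-3)] assms(4) by (rule order_tendstoD(1))
  then show ?thesis by (simp add: zero_less_mult_iff)
qed

lemma nonneg_signomial_top_coeff_pos:
  assumes "finite A" "\<And>x. x \<ge> 0 \<Longrightarrow> signomial A c x \<ge> 0" "M \<in> A" "c M \<noteq> 0"
    and "\<And>a. a \<in> A \<Longrightarrow> a > M \<Longrightarrow> c a = 0"
  shows "c M > 0"
proof (rule ccontr)
  assume "\<not> c M > 0"
  with assms(4) have "-c M > 0" by simp
  from signomial_eventually_pos[OF assms(1,3), of "\<lambda>a. - c a"] this assms(5)
  have "eventually (\<lambda>x. signomial A c x < 0 \<and> x \<ge> 0) at_top"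
    by (auto simp: signomial_def sum_negf intro: eventually_conj eventually_ge_at_top)
  then obtain x where "signomial A c x < 0" "x \<ge> 0" by (auto simp: eventually_at_top_linorder)
  with assms(2) show False by force
qed

lemma nonneg_signomial_neg_coeff_has_pos_above:
  assumes "finite A" "supported_on A c" "\<And>x. x \<ge> 0 \<Longrightarrow> signomial A c x \<ge> 0"
    and "\<And>a. a \<in> A \<Longrightarrow> a \<noteq> \<beta> \<Longrightarrow> c a \<ge> 0" "c \<beta> < 0"
  shows "\<exists>a\<in>A. a > \<beta> \<and> c a > 0"
proof -
  let ?S = "{a\<in>A. c a \<noteq> 0}"
  define M where "M = Max ?S"
  have fin: "finite ?S" using assms(1) by simp
  have "\<beta> \<in> ?S" using assms(2,5) unfolding supported_on_def by force
  then have M: "M \<in> ?S" "\<beta> \<le> M"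
    using Max_in[OF fin] Max_ge[OF fin] unfolding M_def by blast+
  have "c a = 0" if "a \<in> A" "a > M" for a
    using Max_ge[OF fin, of a] that unfolding M_def by force
  then have "c M > 0"
    using nonneg_signomial_top_coeff_pos[OF assms(1,3)] M(1) by blast
  moreover from this assms(5) have "M \<noteq> \<beta>" by auto
  ultimately show ?thesis using M by (auto intro!: bexI[of _ M])
qed

lemma continuous_on_atLeast_attains_inf:
  fixes \<phi> :: "real \<Rightarrow> real"
  assumes "continuous_on {a..} \<phi>" "eventually (\<lambda>x. \<phi> x \<ge> \<phi> a) at_top"
  obtains x1 where "x1 \<ge> a" "\<And>y. y \<ge> a \<Longrightarrow> \<phi> x1 \<le> \<phi> y"
proof -
  from assms(2) obtain R where R: "\<And>x. x \<ge> R \<Longrightarrow> \<phi> x \<ge> \<phi> a"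
    by (auto simp: eventually_at_top_linorder)
  have "continuous_on {a..max a R} \<phi>" using assms(1) by (rule continuous_on_subset) auto
  from continuous_attains_inf[OF compact_Icc _ this] obtain x1
    where x1: "x1 \<in> {a..max a R}" "\<And>y. y \<in> {a..max a R} \<Longrightarrow> \<phi> x1 \<le> \<phi> y" by auto
  have "\<phi> x1 \<le> \<phi> y" if "y \<ge> a" for y
  proof (cases "y \<le> max a R")
    case False
    then have "R \<le> y" by (simp add: not_le)
    with R[of y] x1(2)[of a] show ?thesis by auto
  qed (use x1 that in auto)
  with x1(1) that show ?thesis by auto
qed

lemma AGE_signomial_shifted_attains_inf:
  assumes "finite A" "\<And>a. a \<in> A \<Longrightarrow> a \<noteq> \<beta> \<Longrightarrow> c a \<ge> 0" "\<beta> \<in> A" "u \<in> A" "\<beta> < u" "c u > 0"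
  obtains x1 where "x1 \<ge> 0"
    "\<And>y. y \<ge> 0 \<Longrightarrow> signomial A c x1 * exp (- \<beta> * x1) \<le> signomial A c y * exp (- \<beta> * y)"
proof -
  define \<phi> where "\<phi> x = signomial A c x * exp (- \<beta> * x)" for x
  have lower: "c \<beta> + c u * exp ((u - \<beta>) * x) \<le> \<phi> x" for x
  proof -
    have "exp (a * x) * exp (- \<beta> * x) = exp ((a - \<beta>) * x)" for a
      by (simp add: exp_add[symmetric] algebra_simps)
    then have "\<phi> x = (\<Sum>a\<in>A. c a * exp ((a - \<beta>) * x))"
      by (simp add: \<phi>_def signomial_def sum_distrib_right mult.assoc)
    moreover have "(\<Sum>a\<in>{u, \<beta>}. c a * exp ((a - \<beta>) * x)) \<le> (\<Sum>a\<in>A. c a * exp ((a - \<beta>) * x))"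
      using assms(2-4) by (intro sum_mono2[OF assms(1)]) auto
    ultimately show ?thesis using assms(5) by simp
  qed
  have "filterlim (\<lambda>x. c \<beta> + c u * exp ((u - \<beta>) * x)) at_top at_top"
    using assms(5,6)
    by (intro filterlim_tendsto_add_at_top[OF tendsto_const] filterlim_tendsto_pos_mult_at_top[OF tendsto_const]
        filterlim_compose[OF exp_at_top] filterlim_tendsto_pos_mult_at_top[OF tendsto_const]
        filterlim_ident) auto
  then have "filterlim \<phi> at_top at_top" by (rule filterlim_at_top_mono) (use lower in auto)
  then have "eventually (\<lambda>x. \<phi> x \<ge> \<phi> 0) at_top" by (simp add: filterlim_at_top)
  moreover have "continuous_on {0..} \<phi>"
    unfolding \<phi>_def by (intro continuous_intros continuous_on_signomial)
  ultimately show ?thesis using that continuous_on_atLeast_attains_inf unfolding \<phi>_def by blast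
qed

lemma sum_zero_has_pos_and_neg:
  fixes s :: "'a \<Rightarrow> real"
  assumes "finite A" "(\<Sum>a\<in>A. s a) = 0" "z \<in> A" "s z \<noteq> 0"
  shows "\<exists>a\<in>A. s a > 0" "\<exists>a\<in>A. s a < 0"
proof -
  show "\<exists>a\<in>A. s a > 0"
  proof (rule ccontr)
    assume "\<not> ?thesis"
    then have "0 \<le> - s a" if "a \<in> A" for a using that by (auto simp: not_less)
    from sum_nonneg_eq_0_iff[OF assms(1), of "\<lambda>a. - s a", OF this, THEN iffD1]
    have "\<forall>a\<in>A. - s a = 0" unfolding sum_negf assms(2) by simp
    with assms(3,4) show False by simp
  qed
  show "\<exists>a\<in>A. s a < 0"
  proof (rule ccontr)
    assume "\<not> ?thesis"
    then have "0 \<le> s a" if "a \<in> A" for a using that by (auto simp: not_less)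
    from sum_nonneg_eq_0_iff[OF assms(1), of s, OF this, THEN iffD1]
    have "\<forall>a\<in>A. s a = 0" using assms(2) by simp
    with assms(3,4) show False by simp
  qed
qed

lemma AGE_double_root_coeffs:
  assumes "finite A" "supported_on A p" "\<And>a. a \<in> A \<Longrightarrow> a \<noteq> \<beta> \<Longrightarrow> p a \<ge> 0"
    and "signomial A p x0 = 0" "signomial_deriv A p x0 = 0" "p \<noteq> (\<lambda>_. 0)"
  shows "p \<beta> < 0" "\<exists>a\<in>A. a < \<beta> \<and> p a > 0" "\<exists>a\<in>A. a > \<beta> \<and> p a > 0"
proof -
  have "\<exists>z\<in>A. z \<noteq> \<beta> \<and> p z \<noteq> 0"
  proof (rule ccontr)
    assume "\<not> ?thesis"
    then have supp: "supported_on {\<beta>} p" using assms(2) by (auto simp: supported_on_def)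
    have "\<beta> \<in> A"
    proof (rule ccontr)
      assume "\<beta> \<notin> A"
      with supp assms(2) have "p = (\<lambda>_. 0)" by (auto simp: supported_on_def fun_eq_iff)
      with assms(6) show False ..
    qed
    then have "p \<beta> * exp (\<beta> * x0) = 0"
      using signomial_supported_subset(1)[OF assms(1) _ supp] assms(4) by (simp add: signomial_def)
    with supp assms(6) show False by (auto simp: supported_on_def fun_eq_iff)
  qed
  then obtain z where z: "z \<in> A" "z \<noteq> \<beta>" "p z \<noteq> 0" by blast
  obtain a where a: "a \<in> A" "p a * exp (a * x0) < 0"
    using sum_zero_has_pos_and_neg(2)[OF assms(1), of "\<lambda>a. p a * exp (a * x0)" z]
      assms(4) z(1,3) by (auto simp: signomial_def)
  then have "p a < 0" by (simp add: mult_less_0_iff)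
  with a(1) assms(3) have "a = \<beta>" by force
  with \<open>p a < 0\<close> show "p \<beta> < 0" by simp
  have shift: "(\<Sum>a\<in>A. p a * (a - \<beta>) * exp (a * x0)) = 0"
    using signomial_deriv_minus_shift[of A p x0 \<beta>] assms(4,5) by simp
  have "p z * (z - \<beta>) * exp (z * x0) \<noteq> 0" using z by simp
  note pos_neg = sum_zero_has_pos_and_neg[OF assms(1) shift z(1) this]
  have pos_coeff: "p a > 0" if "a \<in> A" "p a * (a - \<beta>) * exp (a * x0) \<noteq> 0" for a
  proof -
    from that have "a \<noteq> \<beta>" "p a \<noteq> 0" by auto
    with that(1) assms(3) show ?thesis by force
  qed
  show "\<exists>a\<in>A. a < \<beta> \<and> p a > 0"
  proof -
    from pos_neg(2) obtain a where a: "a \<in> A" "p a * (a - \<beta>) * exp (a * x0) < 0" by blast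
    with pos_coeff have pa: "p a > 0" by force
    from a(2) have "(p a * exp (a * x0)) * (a - \<beta>) < 0" by (simp add: mult_ac)
    with pa have "a < \<beta>" by (simp add: mult_less_0_iff)
    with a(1) pa show ?thesis by blast
  qed
  show "\<exists>a\<in>A. a > \<beta> \<and> p a > 0"
  proof -
    from pos_neg(1) obtain a where a: "a \<in> A" "p a * (a - \<beta>) * exp (a * x0) > 0" by blast
    with pos_coeff have pa: "p a > 0" by force
    from a(2) have "(p a * exp (a * x0)) * (a - \<beta>) > 0" by (simp add: mult_ac)
    with pa have "a > \<beta>" by (simp add: zero_less_mult_iff mult_less_0_iff)
    with a(1) pa show ?thesis by blast
  qed
qed

section \<open>AGE and SAGE cones\<close>

lemma AGE_coneI:
  assumes "supported_on A c" "\<And>a. a \<in> A \<Longrightarrow> a \<noteq> \<beta> \<Longrightarrow> c a \<ge> 0"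
    and "\<And>x. x \<in> X \<Longrightarrow> signomial A c x \<ge> 0"
  shows "c \<in> AGE_cone X A \<beta>"
  using assms by (auto simp: AGE_cone_def)

lemma AGE_coneD:
  assumes "c \<in> AGE_cone X A \<beta>"
  shows "supported_on A c" "\<And>a. a \<in> A \<Longrightarrow> a \<noteq> \<beta> \<Longrightarrow> c a \<ge> 0"
    and "\<And>x. x \<in> X \<Longrightarrow> signomial A c x \<ge> 0"
  using assms by (auto simp: AGE_cone_def)

lemma zero_in_AGE_cone: "(\<lambda>_. 0) \<in> AGE_cone X A \<beta>"
  by (auto simp: AGE_cone_def supported_on_def signomial_def)

lemma AGE_cone_cmult: "c \<in> AGE_cone X A \<beta> \<Longrightarrow> s \<ge> 0 \<Longrightarrow> (\<lambda>a. s * c a) \<in> AGE_cone X A \<beta>"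
  by (auto simp: AGE_cone_def supported_on_def signomial_cmult)

lemma AGE_cone_of_nonneg_coeffs:
  assumes "supported_on A c" "\<And>a. a \<in> A \<Longrightarrow> c a \<ge> 0"
  shows "c \<in> AGE_cone X A \<beta>"
  using assms by (auto simp: AGE_cone_def signomial_def intro!: sum_nonneg)

lemma AGE_cone_of_double_root:
  assumes "supported_on A c" "\<And>a. a \<in> A \<Longrightarrow> a \<noteq> \<beta> \<Longrightarrow> c a \<ge> 0"
    and "signomial A c x0 = 0" "signomial_deriv A c x0 = 0"
  shows "c \<in> AGE_cone X A \<beta>"
  using assms AGE_signomial_nonneg_of_double_root[of A \<beta> c x0] by (auto simp: AGE_cone_def)

lemma AGE_cone_subset_SAGE_cone:
  assumes "finite A" "\<beta> \<in> A"
  shows "AGE_cone X A \<beta> \<subseteq> SAGE_cone X A"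
proof
  fix p assume p: "p \<in> AGE_cone X A \<beta>"
  let ?g = "\<lambda>b a. if b = \<beta> then p a else 0"
  have "\<forall>b\<in>A. ?g b \<in> AGE_cone X A b"
  proof
    fix b assume "b \<in> A"
    show "?g b \<in> AGE_cone X A b" using p zero_in_AGE_cone by (cases "b = \<beta>") simp_all
  qed
  moreover have "p = (\<lambda>a. \<Sum>b\<in>A. ?g b a)"
    using assms by (simp add: if_distrib cong: if_cong)
  ultimately show "p \<in> SAGE_cone X A" unfolding SAGE_cone_def
    by (intro CollectI exI[of _ ?g]) simp
qed

lemma SAGE_cone_nonneg:
  assumes "c \<in> SAGE_cone X A" "x \<in> X"
  shows "signomial A c x \<ge> 0"
proof -
  from assms(1) obtain g where "\<forall>\<beta>\<in>A. g \<beta> \<in> AGE_cone X A \<beta>" "c = (\<lambda>a. \<Sum>\<beta>\<in>A. g \<beta> a)"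
    unfolding SAGE_cone_def by blast
  with assms(2) show ?thesis by (auto simp: signomial_sum AGE_cone_def intro!: sum_nonneg)
qed

lemma extreme_ray_summand_vanishes:
  assumes "extreme_ray K c" "g \<in> K" "(\<lambda>a. c a - g a) \<in> K" "c z \<noteq> 0" "g z = 0"
  shows "g y = 0"
proof -
  have "c = (\<lambda>a. g a + (c a - g a))" by simp
  with assms(1-3) obtain s where "g = (\<lambda>a. s * c a)"
    unfolding extreme_ray_def by blast
  with assms(4,5) show ?thesis by simp
qed

lemma extreme_ray_SAGE_in_AGE:
  assumes "finite A" "extreme_ray (SAGE_cone X A) c"
  obtains \<beta> where "\<beta> \<in> A" "c \<in> AGE_cone X A \<beta>"
proof -
  from assms(2) have "c \<in> SAGE_cone X A" "c \<noteq> (\<lambda>_. 0)"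
    unfolding extreme_ray_def by auto
  then obtain g where g: "\<forall>\<beta>\<in>A. g \<beta> \<in> AGE_cone X A \<beta>" and c: "c = (\<lambda>a. \<Sum>\<beta>\<in>A. g \<beta> a)"
    and "c \<noteq> (\<lambda>_. 0)"
    unfolding SAGE_cone_def by blast
  then obtain \<beta> where \<beta>: "\<beta> \<in> A" "g \<beta> \<noteq> (\<lambda>_. 0)" by force
  let ?h = "\<lambda>a. \<Sum>b\<in>A - {\<beta>}. g b a"
  have "?h \<in> SAGE_cone X A"
    unfolding SAGE_cone_def
    by (intro CollectI exI[of _ "g(\<beta> := (\<lambda>_. 0))"])
      (use assms(1) \<beta>(1) g zero_in_AGE_cone in \<open>auto simp: sum.remove\<close>)
  moreover have "c = (\<lambda>a. g \<beta> a + ?h a)"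
    using assms(1) \<beta>(1) c by (simp add: sum.remove)
  moreover have "g \<beta> \<in> SAGE_cone X A"
    using AGE_cone_subset_SAGE_cone[OF assms(1) \<beta>(1)] g \<beta>(1) by blast
  ultimately obtain s where s: "s \<ge> 0" "g \<beta> = (\<lambda>a. s * c a)"
    using assms(2) unfolding extreme_ray_def by blast
  with \<beta>(2) have "s > 0" by auto
  with s have "c = (\<lambda>a. (1 / s) * g \<beta> a)" by auto
  with AGE_cone_cmult[of "g \<beta>" X A \<beta> "1 / s"] g \<beta>(1) \<open>s > 0\<close> have "c \<in> AGE_cone X A \<beta>"
    by simp
  with \<beta>(1) show ?thesis by (rule that)
qed

section \<open>Decompositions into AGE pieces\<close>

definition AGE_decomposition ::
    "real set \<Rightarrow> real set \<Rightarrow> (real \<Rightarrow> real) \<Rightarrow> 'i set \<Rightarrow> ('i \<Rightarrow> real) \<Rightarrow> ('i \<Rightarrow> real \<Rightarrow> real) \<Rightarrow> bool"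
  where "AGE_decomposition X A c I b p \<longleftrightarrow> finite I \<and>
    (\<forall>i\<in>I. b i \<in> A \<and> p i \<in> AGE_cone X A (b i)) \<and> (\<forall>a. (\<Sum>i\<in>I. p i a) = c a)"

lemma extreme_ray_SAGE_if_AGE_pieces_multiples:
  assumes "finite A" "c \<in> SAGE_cone X A" "signomial A c x1 > 0" "x1 \<in> X"
    \<comment> \<open>the index type \<open>real \<times> bool\<close> enumerates the pieces of two SAGE decompositions at once\<close>
    and pieces: "\<And>(I :: (real \<times> bool) set) b p i.
      AGE_decomposition X A c I b p \<Longrightarrow> i \<in> I \<Longrightarrow> \<exists>s. p i = (\<lambda>a. s * c a)"
  shows "extreme_ray (SAGE_cone X A) c"
  unfolding extreme_ray_def
proof (intro conjI allI impI)
  show "c \<noteq> (\<lambda>_. 0)" using assms(3) by (auto simp: signomial_def)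
  have nonneg_factor: "s \<ge> 0" if "(\<lambda>a. s * c a) \<in> SAGE_cone X A" for s
    using SAGE_cone_nonneg[OF that assms(4)] assms(3)
    by (simp add: signomial_cmult zero_le_mult_iff)
  fix g h assume "g \<in> SAGE_cone X A \<and> h \<in> SAGE_cone X A \<and> c = (\<lambda>a. g a + h a)"
  then obtain G H where G: "\<forall>\<beta>\<in>A. G \<beta> \<in> AGE_cone X A \<beta>" "g = (\<lambda>a. \<Sum>\<beta>\<in>A. G \<beta> a)"
    and H: "\<forall>\<beta>\<in>A. H \<beta> \<in> AGE_cone X A \<beta>" "h = (\<lambda>a. \<Sum>\<beta>\<in>A. H \<beta> a)"
    and gh: "g \<in> SAGE_cone X A" "h \<in> SAGE_cone X A" "c = (\<lambda>a. g a + h a)"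
    unfolding SAGE_cone_def by blast
  define p where "p = (\<lambda>(\<beta>, t::bool). if t then G \<beta> else H \<beta>)"
  have "(\<Sum>i\<in>A \<times> UNIV. p i a) = c a" for a
  proof -
    have "(\<Sum>i\<in>A \<times> UNIV. p i a) = (\<Sum>\<beta>\<in>A. \<Sum>t\<in>UNIV. p (\<beta>, t) a)"
      by (simp add: sum.cartesian_product p_def case_prod_unfold cong: if_cong)
    also have "\<dots> = (\<Sum>\<beta>\<in>A. G \<beta> a + H \<beta> a)" by (simp add: p_def UNIV_bool add.commute)
    also have "\<dots> = c a" using G(2) H(2) gh(3) by (simp add: sum.distrib)
    finally show ?thesis .
  qed
  with assms(1) G H have "AGE_decomposition X A c (A \<times> UNIV) fst p"
    unfolding AGE_decomposition_def by (auto simp: p_def)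
  with pieces obtain s where s: "\<And>i. i \<in> A \<times> UNIV \<Longrightarrow> p i = (\<lambda>a. s i * c a)"
    by metis
  have "G \<beta> = (\<lambda>a. s (\<beta>, True) * c a)" "H \<beta> = (\<lambda>a. s (\<beta>, False) * c a)" if "\<beta> \<in> A" for \<beta>
    using s[of "(\<beta>, True)"] s[of "(\<beta>, False)"] that by (simp_all add: p_def)
  then have g: "g = (\<lambda>a. (\<Sum>\<beta>\<in>A. s (\<beta>, True)) * c a)"
    and h: "h = (\<lambda>a. (\<Sum>\<beta>\<in>A. s (\<beta>, False)) * c a)"
    unfolding G(2) H(2) sum_distrib_right by (auto intro!: sum.cong)
  show "\<exists>s\<ge>0. g = (\<lambda>a. s * c a)"
    using nonneg_factor gh(1) unfolding g by (intro exI[of _ "\<Sum>\<beta>\<in>A. s (\<beta>, True)"]) simp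
  show "\<exists>s\<ge>0. h = (\<lambda>a. s * c a)"
    using nonneg_factor gh(2) unfolding h by (intro exI[of _ "\<Sum>\<beta>\<in>A. s (\<beta>, False)"]) simp
qed (use assms(2) in simp)

lemma AGE_decompositionD:
  assumes "AGE_decomposition X A c I b p"
  shows "finite I" "\<And>i. i \<in> I \<Longrightarrow> b i \<in> A" "\<And>i. i \<in> I \<Longrightarrow> p i \<in> AGE_cone X A (b i)"
    and "\<And>a. (\<Sum>i\<in>I. p i a) = c a"
  using assms unfolding AGE_decomposition_def by auto

lemma AGE_decomposition_supported:
  assumes "AGE_decomposition X A c I b p" "i \<in> I" "p i a \<noteq> 0"
  shows "a \<in> A"
  using AGE_coneD(1)[OF AGE_decompositionD(3)[OF assms(1,2)]] assms(3)
  by (auto simp: supported_on_def)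

lemma AGE_decomposition_coeff_nonneg:
  assumes "AGE_decomposition X A c I b p" "i \<in> I" "a \<noteq> b i"
  shows "p i a \<ge> 0"
  using AGE_coneD(1,2)[OF AGE_decompositionD(3)[OF assms(1,2)]] assms(3)
  by (cases "a \<in> A") (auto simp: supported_on_def)

lemma sum_pos_at_extreme_support:
  fixes p :: "'i \<Rightarrow> real \<Rightarrow> real" and R :: "real \<Rightarrow> real \<Rightarrow> bool"
  assumes "finite I" "i0 \<in> I" "p i0 M \<noteq> 0"
    and "\<And>i a. i \<in> I \<Longrightarrow> a \<noteq> b i \<Longrightarrow> p i a \<ge> 0"
    and "\<And>i. i \<in> I \<Longrightarrow> p i (b i) < 0 \<Longrightarrow> \<exists>a. R (b i) a \<and> p i a \<noteq> 0"
    and "\<And>i a. i \<in> I \<Longrightarrow> p i a \<noteq> 0 \<Longrightarrow> \<not> R M a"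
  shows "(\<Sum>i\<in>I. p i M) > 0"
proof -
  have nonneg: "p i M \<ge> 0" if "i \<in> I" for i
  proof (rule ccontr)
    assume "\<not> p i M \<ge> 0"
    moreover from this assms(4)[OF that] have "M = b i" by force
    ultimately have "p i (b i) < 0" by simp
    with assms(5,6)[OF that] \<open>M = b i\<close> show False by blast
  qed
  with assms(3) have "p i0 M > 0" using assms(2) by force
  with nonneg show ?thesis using sum_pos2[OF assms(1,2), of "\<lambda>i. p i M"] by blast
qed

lemma AGE_decomposition_support_le_pos:
  assumes "finite A" "AGE_decomposition {0..} A c I b p" "i \<in> I" "p i a \<noteq> 0"
  shows "\<exists>a'\<in>A. a \<le> a' \<and> c a' > 0"
proof -
  note dec = AGE_decompositionD[OF assms(2)]
  let ?S = "{a\<in>A. \<exists>i\<in>I. p i a \<noteq> 0}"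
  define M where "M = Max ?S"
  have fin: "finite ?S" using assms(1) by simp
  note supp = AGE_decomposition_supported[OF assms(2)]
  have "a \<in> ?S" using assms(3,4) supp by blast
  then have M: "M \<in> ?S" "a \<le> M" using Max_in[OF fin] Max_ge[OF fin] unfolding M_def by blast+
  then obtain i0 where "i0 \<in> I" "p i0 M \<noteq> 0" by blast
  have "(\<Sum>i\<in>I. p i M) > 0"
  proof (rule sum_pos_at_extreme_support[where R = "(<)" and b = b and p = p and M = M, OF dec(1) \<open>i0 \<in> I\<close> \<open>p i0 M \<noteq> 0\<close>])
    show "\<And>i a. i \<in> I \<Longrightarrow> a \<noteq> b i \<Longrightarrow> p i a \<ge> 0"
      using AGE_decomposition_coeff_nonneg[OF assms(2)] .
    show "\<exists>a. b i < a \<and> p i a \<noteq> 0" if "i \<in> I" "p i (b i) < 0" for i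
      using nonneg_signomial_neg_coeff_has_pos_above[OF assms(1) AGE_coneD(1,3,2)[OF dec(3)[OF that(1)]]]
        that(2) by force
    show "\<not> M < a" if "i \<in> I" "p i a \<noteq> 0" for i a
      using Max_ge[OF fin, of a] supp[OF that] that unfolding M_def by force
  qed
  with M dec(4) show ?thesis by auto
qed

lemma AGE_decomposition_support_ge_pos:
  assumes "finite A" "AGE_decomposition {0..} A c I b p" "i \<in> I" "p i a \<noteq> 0"
    and "\<And>i. i \<in> I \<Longrightarrow> signomial A (p i) x0 = 0 \<and> signomial_deriv A (p i) x0 = 0"
  shows "\<exists>a'\<in>A. a' \<le> a \<and> c a' > 0"
proof -
  note dec = AGE_decompositionD[OF assms(2)]
  let ?S = "{a\<in>A. \<exists>i\<in>I. p i a \<noteq> 0}"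
  define M where "M = Min ?S"
  have fin: "finite ?S" using assms(1) by simp
  note supp = AGE_decomposition_supported[OF assms(2)]
  have "a \<in> ?S" using assms(3,4) supp by blast
  then have M: "M \<in> ?S" "M \<le> a" using Min_in[OF fin] Min_le[OF fin] unfolding M_def by blast+
  then obtain i0 where "i0 \<in> I" "p i0 M \<noteq> 0" by blast
  have "(\<Sum>i\<in>I. p i M) > 0"
  proof (rule sum_pos_at_extreme_support[where R = "(>)" and b = b and p = p and M = M, OF dec(1) \<open>i0 \<in> I\<close> \<open>p i0 M \<noteq> 0\<close>])
    show "\<And>i a. i \<in> I \<Longrightarrow> a \<noteq> b i \<Longrightarrow> p i a \<ge> 0"
      using AGE_decomposition_coeff_nonneg[OF assms(2)] .
    show "\<exists>a. b i > a \<and> p i a \<noteq> 0" if "i \<in> I" "p i (b i) < 0" for i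
    proof -
      have "p i \<noteq> (\<lambda>_. 0)" using that(2) by auto
      with AGE_double_root_coeffs(2)[OF assms(1) AGE_coneD(1,2)[OF dec(3)[OF that(1)]]] assms(5)[OF that(1)]
      show ?thesis by force
    qed
    show "\<not> M > a" if "i \<in> I" "p i a \<noteq> 0" for i a
      using Min_le[OF fin, of a] supp[OF that] that unfolding M_def by force
  qed
  with M dec(4) show ?thesis by auto
qed

lemma AGE_decomposition_sum:
  assumes "AGE_decomposition X A c I b p"
  shows "signomial A c x = (\<Sum>i\<in>I. signomial A (p i) x)"
    and "signomial_deriv A c x = (\<Sum>i\<in>I. signomial_deriv A (p i) x)"
proof -
  have "c = (\<lambda>a. \<Sum>i\<in>I. p i a)" using AGE_decompositionD(4)[OF assms] by simp
  then show "signomial A c x = (\<Sum>i\<in>I. signomial A (p i) x)"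
    and "signomial_deriv A c x = (\<Sum>i\<in>I. signomial_deriv A (p i) x)"
    by (simp_all only: signomial_sum signomial_deriv_sum)
qed

lemma AGE_decomposition_root:
  assumes "AGE_decomposition {0..} A c I b p" "x0 \<ge> 0" "signomial A c x0 = 0" "i \<in> I"
  shows "signomial A (p i) x0 = 0"
proof -
  note dec = AGE_decompositionD[OF assms(1)]
  have "signomial A (p i) x0 \<ge> 0" if "i \<in> I" for i
    using AGE_coneD(3)[OF dec(3)[OF that]] assms(2) by simp
  from sum_nonneg_eq_0_iff[OF dec(1), of "\<lambda>i. signomial A (p i) x0", OF this, THEN iffD1]
  show ?thesis using assms(3,4) AGE_decomposition_sum(1)[OF assms(1)] by simp
qed

lemma AGE_decomposition_double_root:
  assumes "AGE_decomposition {0..} A c I b p" "x0 \<ge> 0"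
    and "signomial A c x0 = 0" "signomial_deriv A c x0 = 0" "i \<in> I"
  shows "signomial A (p i) x0 = 0 \<and> signomial_deriv A (p i) x0 = 0"
proof -
  note dec = AGE_decompositionD[OF assms(1)]
  note root = AGE_decomposition_root[OF assms(1-3)]
  have "signomial_deriv A (p i) x0 \<ge> 0" if "i \<in> I" for i
    using signomial_deriv_nonneg_at_left_root[OF _ root[OF that]] AGE_coneD(3)[OF dec(3)[OF that]]
      assms(2) by simp
  from sum_nonneg_eq_0_iff[OF dec(1), of "\<lambda>i. signomial_deriv A (p i) x0", OF this, THEN iffD1]
  show ?thesis using assms(4,5) root[OF assms(5)] AGE_decomposition_sum(2)[OF assms(1)] by simp
qed

section \<open>Binomials, trinomials and circuits\<close>

definition consecutive :: "real set \<Rightarrow> real \<Rightarrow> real \<Rightarrow> bool" where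
  "consecutive A a b \<longleftrightarrow> a \<in> A \<and> b \<in> A \<and> a < b \<and> (\<forall>x\<in>A. x \<le> a \<or> b \<le> x)"

definition trinomial :: "real \<Rightarrow> real \<Rightarrow> real \<Rightarrow> real \<Rightarrow> real \<Rightarrow> real \<Rightarrow> real \<Rightarrow> real" where
  "trinomial l \<beta> u cm ci cp = (\<lambda>a. if a = u then cp else if a = \<beta> then ci else if a = l then cm else 0)"

lemma signomial_binomial:
  assumes "finite A" "w \<in> A" "u \<in> A" "w \<noteq> u"
  shows "signomial A (\<lambda>a. t * (if a = u then 1 else if a = w then -1 else 0)) x
      = t * exp (u * x) - t * exp (w * x)"
    and "signomial_deriv A (\<lambda>a. t * (if a = u then 1 else if a = w then -1 else 0)) x
      = t * u * exp (u * x) - t * w * exp (w * x)"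
proof -
  have "supported_on {u, w} (\<lambda>a. t * (if a = u then 1 else if a = w then -1 else 0))"
    by (auto simp: supported_on_def)
  note sub = signomial_supported_subset[OF assms(1) _ this]
  show "signomial A (\<lambda>a. t * (if a = u then 1 else if a = w then -1 else 0)) x
      = t * exp (u * x) - t * exp (w * x)"
    "signomial_deriv A (\<lambda>a. t * (if a = u then 1 else if a = w then -1 else 0)) x
      = t * u * exp (u * x) - t * w * exp (w * x)"
    using sub[of x] assms by (simp_all add: signomial_def[of "{u, w}"] signomial_deriv_def[of "{u, w}"])
qed

lemma signomial_trinomial:
  assumes "finite A" "l \<in> A" "\<beta> \<in> A" "u \<in> A" "l < \<beta>" "\<beta> < u"
  shows "signomial A (trinomial l \<beta> u cm ci cp) x = cp * exp (u * x) + ci * exp (\<beta> * x) + cm * exp (l * x)"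
    and "signomial_deriv A (trinomial l \<beta> u cm ci cp) x
      = cp * u * exp (u * x) + ci * \<beta> * exp (\<beta> * x) + cm * l * exp (l * x)"
proof -
  have "supported_on {u, \<beta>, l} (trinomial l \<beta> u cm ci cp)"
    by (auto simp: supported_on_def trinomial_def)
  note sub = signomial_supported_subset[OF assms(1) _ this]
  show "signomial A (trinomial l \<beta> u cm ci cp) x
      = cp * exp (u * x) + ci * exp (\<beta> * x) + cm * exp (l * x)"
    "signomial_deriv A (trinomial l \<beta> u cm ci cp) x
      = cp * u * exp (u * x) + ci * \<beta> * exp (\<beta> * x) + cm * l * exp (l * x)"
    using sub[of x] assms
    by (simp_all add: signomial_def[of "{u, \<beta>, l}"] signomial_deriv_def[of "{u, \<beta>, l}"] trinomial_def)
qed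

lemma binomial_in_AGE_cone:
  assumes "finite A" "w \<in> A" "u \<in> A" "w < u" "t \<ge> 0"
  shows "(\<lambda>a. t * (if a = u then 1 else if a = w then -1 else 0)) \<in> AGE_cone {0..} A w"
proof (rule AGE_coneI)
  show "supported_on A (\<lambda>a. t * (if a = u then 1 else if a = w then -1 else 0))"
    using assms(2,3) by (auto simp: supported_on_def)
  fix x :: real assume "x \<in> {0..}"
  then have "exp (w * x) \<le> exp (u * x)" using assms(4) by (simp add: mult_right_mono)
  then have "t * exp (w * x) \<le> t * exp (u * x)" using assms(5) by (rule mult_left_mono)
  then show "signomial A (\<lambda>a. t * (if a = u then 1 else if a = w then -1 else 0)) x \<ge> 0"
    using signomial_binomial(1)[OF assms(1-3) less_imp_neq[OF assms(4)], of t x] by linarith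
next
  show "0 \<le> t * (if a = u then 1 else if a = w then -1 else 0)" if "a \<noteq> w" for a
    using assms(5) that by simp
qed

lemma two_by_three_kernel_proportional:
  fixes X Y Z X' Y' Z' u \<beta> l :: real
  assumes "X + Y + Z = 0" "u * X + \<beta> * Y + l * Z = 0"
    and "X' + Y' + Z' = 0" "u * X' + \<beta> * Y' + l * Z' = 0" "\<beta> \<noteq> l"
  shows "X * Y' = X' * Y" "X * Z' = X' * Z"
proof -
  have "(\<beta> - l) * (X * Z' - X' * Z) = 0" using assms(1-4) by algebra
  with assms(5) show Z: "X * Z' = X' * Z" by simp
  from assms(1,3) Z show "X * Y' = X' * Y" by algebra
qed

lemma trinomial_double_roots_proportional:
  assumes "finite A" "l \<in> A" "\<beta> \<in> A" "u \<in> A" "l < \<beta>" "\<beta> < u" "cp \<noteq> 0"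
    and "signomial A (trinomial l \<beta> u cm ci cp) x0 = 0"
      "signomial_deriv A (trinomial l \<beta> u cm ci cp) x0 = 0"
    and "signomial A (trinomial l \<beta> u dm di dp) x0 = 0"
      "signomial_deriv A (trinomial l \<beta> u dm di dp) x0 = 0"
  shows "trinomial l \<beta> u dm di dp = (\<lambda>a. (dp / cp) * trinomial l \<beta> u cm ci cp a)"
proof -
  note s3 = signomial_trinomial[OF assms(1-6)]
  have e: "cp * exp (u * x0) + ci * exp (\<beta> * x0) + cm * exp (l * x0) = 0"
      "u * (cp * exp (u * x0)) + \<beta> * (ci * exp (\<beta> * x0)) + l * (cm * exp (l * x0)) = 0"
    and d: "dp * exp (u * x0) + di * exp (\<beta> * x0) + dm * exp (l * x0) = 0"
      "u * (dp * exp (u * x0)) + \<beta> * (di * exp (\<beta> * x0)) + l * (dm * exp (l * x0)) = 0"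
    using assms(8-11) unfolding s3 by (simp_all add: mult_ac)
  note two_by_three_kernel_proportional[OF e d less_imp_neq[OF assms(5), symmetric]]
  then have "cp * di = dp * ci" "cp * dm = dp * cm"
    by (simp_all add: algebra_simps)
  with assms(5-7) show ?thesis by (auto simp: trinomial_def fun_eq_iff field_simps)
qed

(* The terms at x0 are u - \<beta>, -(u - l) and \<beta> - l: they sum to zero, and so do their
   products with the exponents, hence the double root at x0. *)
definition circuit :: "real \<Rightarrow> real \<Rightarrow> real \<Rightarrow> real \<Rightarrow> real \<Rightarrow> real" where
  "circuit x0 l \<beta> u = trinomial l \<beta> u
     ((u - \<beta>) * exp (- l * x0)) (- (u - l) * exp (- \<beta> * x0)) ((\<beta> - l) * exp (- u * x0))"

lemma circuit_double_root:
  assumes "finite A" "l \<in> A" "\<beta> \<in> A" "u \<in> A" "l < \<beta>" "\<beta> < u"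
  shows "signomial A (circuit x0 l \<beta> u) x0 = 0" "signomial_deriv A (circuit x0 l \<beta> u) x0 = 0"
proof -
  have e: "k * exp (- v * x0) * exp (v * x0) = k" "k * exp (- v * x0) * v * exp (v * x0) = k * v"
    for k v by (simp_all add: mult.assoc mult.left_commute[of v] exp_add[symmetric])
  show "signomial A (circuit x0 l \<beta> u) x0 = 0" "signomial_deriv A (circuit x0 l \<beta> u) x0 = 0"
    unfolding circuit_def signomial_trinomial[OF assms] e by algebra+
qed

lemma circuit_coeffs:
  assumes "l < \<beta>" "\<beta> < u"
  shows "circuit y l \<beta> u l > 0" "circuit y l \<beta> u \<beta> < 0" "circuit y l \<beta> u u > 0"
    and "\<And>a. a \<notin> {l, \<beta>, u} \<Longrightarrow> circuit y l \<beta> u a = 0"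
  using assms by (auto simp: circuit_def trinomial_def mult_less_0_iff)

lemma circuit_in_AGE_cone:
  assumes "finite A" "l \<in> A" "\<beta> \<in> A" "u \<in> A" "l < \<beta>" "\<beta> < u"
  shows "circuit x0 l \<beta> u \<in> AGE_cone X A \<beta>"
proof (rule AGE_cone_of_double_root[OF _ _ circuit_double_root[OF assms]])
  show "supported_on A (circuit x0 l \<beta> u)"
    using assms(2-4) by (auto simp: supported_on_def intro!: circuit_coeffs(4)[OF assms(5,6)])
  show "circuit x0 l \<beta> u a \<ge> 0" if "a \<noteq> \<beta>" for a
    using circuit_coeffs[OF assms(5,6), where y = x0] that by (cases "a = l \<or> a = u") auto
qed

(* \<lambda>_(i-1) and \<lambda>_(i+1) of the paper for (l, \<beta>, u) = (\<alpha>_(i-1), \<alpha>_i, \<alpha>_(i+1)):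
   the barycentric coordinates of \<beta> with respect to l and u. *)
definition lam_lo :: "real \<Rightarrow> real \<Rightarrow> real \<Rightarrow> real" where
  "lam_lo l \<beta> u = (u - \<beta>) / (u - l)"

definition lam_hi :: "real \<Rightarrow> real \<Rightarrow> real \<Rightarrow> real" where
  "lam_hi l \<beta> u = (\<beta> - l) / (u - l)"

definition circuit_coeff :: "real \<Rightarrow> real \<Rightarrow> real \<Rightarrow> real \<Rightarrow> real \<Rightarrow> real" where
  "circuit_coeff l \<beta> u cm cp =
     - ((cm / lam_lo l \<beta> u) powr lam_lo l \<beta> u * (cp / lam_hi l \<beta> u) powr lam_hi l \<beta> u)"

lemma trinomial_double_root_iff_balanced:
  fixes cp ci cm u \<beta> l x :: real
  shows "cp * exp (u * x) + ci * exp (\<beta> * x) + cm * exp (l * x) = 0 \<and>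
   cp * u * exp (u * x) + ci * \<beta> * exp (\<beta> * x) + cm * l * exp (l * x) = 0 \<longleftrightarrow>
   ci * exp (\<beta> * x) = - (cp * exp (u * x) + cm * exp (l * x)) \<and>
   cp * (u - \<beta>) * exp (u * x) = cm * (\<beta> - l) * exp (l * x)"
proof -
  have "cp * u * exp (u * x) + ci * \<beta> * exp (\<beta> * x) + cm * l * exp (l * x)
      = \<beta> * (cp * exp (u * x) + ci * exp (\<beta> * x) + cm * exp (l * x))
        + (cp * (u - \<beta>) * exp (u * x) - cm * (\<beta> - l) * exp (l * x))"
    by (simp add: algebra_simps)
  then show ?thesis by auto
qed

lemma balanced_point_exists:
  fixes l \<beta> u cp cm :: real
  assumes "l < \<beta>" "\<beta> < u" "cp > 0" "cm > 0"
  obtains x0 where "cp * (u - \<beta>) * exp (u * x0) = cm * (\<beta> - l) * exp (l * x0)"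
proof -
  define q where "q = (cm * (\<beta> - l)) / (cp * (u - \<beta>))"
  have q: "q > 0" using assms unfolding q_def by simp
  define x0 where "x0 = ln q / (u - l)"
  have "(u - l) * x0 = ln q" using assms(1,2) by (simp add: x0_def)
  have "exp (u * x0) = exp ((u - l) * x0 + l * x0)" by (simp add: algebra_simps)
  also have "\<dots> = q * exp (l * x0)" using \<open>(u - l) * x0 = ln q\<close> q by (simp add: exp_add)
  finally have "exp (u * x0) = q * exp (l * x0)" .
  then have "cp * (u - \<beta>) * exp (u * x0) = cm * (\<beta> - l) * exp (l * x0)"
    using assms unfolding q_def by (simp add: field_simps)
  then show ?thesis by (rule that)
qed

(* At the balance point x0 the outer terms are in ratio \<lambda>_(i+1) : \<lambda>_(i-1), where weighted
   AM-GM holds with equality. *)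
context
  fixes l \<beta> u cp cm x0 :: real
  assumes ord: "l < \<beta>" "\<beta> < u" and pos: "cp > 0" "cm > 0"
    and balanced: "cp * (u - \<beta>) * exp (u * x0) = cm * (\<beta> - l) * exp (l * x0)"
begin

lemma balanced_scaled_coeffs:
  defines "S \<equiv> cp * exp (u * x0) + cm * exp (l * x0)"
  shows "cp / lam_hi l \<beta> u = S * exp (- u * x0)" "cm / lam_lo l \<beta> u = S * exp (- l * x0)"
proof -
  have "cp * exp (u * x0) = lam_hi l \<beta> u * S" "cm * exp (l * x0) = lam_lo l \<beta> u * S"
    using balanced ord unfolding S_def lam_hi_def lam_lo_def
    by (simp_all add: field_simps; simp add: algebra_simps)+
  moreover have "lam_hi l \<beta> u > 0" "lam_lo l \<beta> u > 0" using ord by (simp_all add: lam_hi_def lam_lo_def)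
  ultimately show "cp / lam_hi l \<beta> u = S * exp (- u * x0)" "cm / lam_lo l \<beta> u = S * exp (- l * x0)"
    by (simp_all add: field_simps exp_minus)
qed

lemma balanced_circuit_coeff:
  "circuit_coeff l \<beta> u cm cp = - ((cp * exp (u * x0) + cm * exp (l * x0)) * exp (- \<beta> * x0))"
proof -
  define S where "S = cp * exp (u * x0) + cm * exp (l * x0)"
  have S: "S > 0" using pos unfolding S_def by (simp add: add_pos_pos)
  have sum: "lam_lo l \<beta> u + lam_hi l \<beta> u = 1"
    using ord by (simp add: lam_lo_def lam_hi_def add_divide_distrib[symmetric])
  have "l * lam_lo l \<beta> u + u * lam_hi l \<beta> u = (l * (u - \<beta>) + u * (\<beta> - l)) / (u - l)"
    by (simp add: lam_lo_def lam_hi_def add_divide_distrib)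
  also have "l * (u - \<beta>) + u * (\<beta> - l) = \<beta> * (u - l)" by (simp add: algebra_simps)
  finally have bary: "l * lam_lo l \<beta> u + u * lam_hi l \<beta> u = \<beta>" using ord by simp
  have "(cm / lam_lo l \<beta> u) powr lam_lo l \<beta> u * (cp / lam_hi l \<beta> u) powr lam_hi l \<beta> u
      = S powr (lam_lo l \<beta> u + lam_hi l \<beta> u)
        * exp (- (l * lam_lo l \<beta> u + u * lam_hi l \<beta> u) * x0)"
    unfolding balanced_scaled_coeffs[folded S_def] using S
    by (simp add: powr_def ln_mult powr_add exp_add[symmetric] algebra_simps)
  also have "\<dots> = S * exp (- \<beta> * x0)" using sum bary S by simp
  finally show ?thesis unfolding circuit_coeff_def S_def by simp
qed

lemma balanced_ratio_iff: "lam_lo l \<beta> u / lam_hi l \<beta> u \<le> cm / cp \<longleftrightarrow> x0 \<ge> 0"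
proof -
  define S where "S = cp * exp (u * x0) + cm * exp (l * x0)"
  have S: "S > 0" using pos unfolding S_def by (simp add: add_pos_pos)
  have r: "lam_lo l \<beta> u / lam_hi l \<beta> u > 0" using ord by (simp add: lam_lo_def lam_hi_def)
  have lam: "lam_hi l \<beta> u > 0" "lam_lo l \<beta> u > 0" using ord by (simp_all add: lam_hi_def lam_lo_def)
  with balanced_scaled_coeffs[folded S_def]
  have "cp = lam_hi l \<beta> u * (S * exp (- u * x0))" "cm = lam_lo l \<beta> u * (S * exp (- l * x0))"
    by (simp_all add: divide_eq_eq mult.commute)
  then have "cm / cp = (lam_lo l \<beta> u / lam_hi l \<beta> u) * (exp (- l * x0) / exp (- u * x0))"
    using S lam by simp
  also have "exp (- l * x0) / exp (- u * x0) = exp ((u - l) * x0)"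
    by (simp add: exp_diff[symmetric] algebra_simps)
  finally have "cm / cp = (lam_lo l \<beta> u / lam_hi l \<beta> u) * exp ((u - l) * x0)" .
  then have "lam_lo l \<beta> u / lam_hi l \<beta> u \<le> cm / cp \<longleftrightarrow>
      (lam_lo l \<beta> u / lam_hi l \<beta> u) * 1 \<le> (lam_lo l \<beta> u / lam_hi l \<beta> u) * exp ((u - l) * x0)"
    by simp
  also have "\<dots> \<longleftrightarrow> 1 \<le> exp ((u - l) * x0)" using r by (rule mult_le_cancel_left_pos)
  also have "\<dots> \<longleftrightarrow> x0 \<ge> 0" using ord by (simp add: zero_le_mult_iff)
  finally show ?thesis .
qed

end

lemma trinomial_double_root_iff:
  fixes l \<beta> u cp cm ci :: real
  assumes "l < \<beta>" "\<beta> < u" "cp > 0" "cm > 0"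
  shows "(\<exists>x0\<ge>0. cp * exp (u * x0) + ci * exp (\<beta> * x0) + cm * exp (l * x0) = 0 \<and>
            cp * u * exp (u * x0) + ci * \<beta> * exp (\<beta> * x0) + cm * l * exp (l * x0) = 0)
     \<longleftrightarrow> ci = circuit_coeff l \<beta> u cm cp \<and> lam_lo l \<beta> u / lam_hi l \<beta> u \<le> cm / cp"
    (is "(\<exists>x0\<ge>0. ?root x0) \<longleftrightarrow> _")
proof
  assume "\<exists>x0\<ge>0. ?root x0"
  then obtain x0 where "x0 \<ge> 0" "?root x0" by blast
  then have ci: "ci * exp (\<beta> * x0) = - (cp * exp (u * x0) + cm * exp (l * x0))"
    and bal: "cp * (u - \<beta>) * exp (u * x0) = cm * (\<beta> - l) * exp (l * x0)"
    unfolding trinomial_double_root_iff_balanced by auto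
  have "ci = ci * exp (\<beta> * x0) * exp (- \<beta> * x0)" by (simp add: mult.assoc exp_add[symmetric])
  also have "\<dots> = circuit_coeff l \<beta> u cm cp"
    unfolding ci balanced_circuit_coeff[OF assms bal] by (simp only: mult_minus_left)
  finally show "ci = circuit_coeff l \<beta> u cm cp \<and> lam_lo l \<beta> u / lam_hi l \<beta> u \<le> cm / cp"
    using balanced_ratio_iff[OF assms bal] \<open>x0 \<ge> 0\<close> by simp
next
  assume H: "ci = circuit_coeff l \<beta> u cm cp \<and> lam_lo l \<beta> u / lam_hi l \<beta> u \<le> cm / cp"
  obtain x0 where bal: "cp * (u - \<beta>) * exp (u * x0) = cm * (\<beta> - l) * exp (l * x0)"
    using balanced_point_exists[OF assms] .
  have "ci * exp (\<beta> * x0) = - (cp * exp (u * x0) + cm * exp (l * x0))"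
    using H unfolding balanced_circuit_coeff[OF assms bal]
    by (simp add: mult.assoc exp_add[symmetric])
  with bal have "?root x0" unfolding trinomial_double_root_iff_balanced by simp
  moreover have "x0 \<ge> 0" using balanced_ratio_iff[OF assms bal] H by simp
  ultimately show "\<exists>x0\<ge>0. ?root x0" by blast
qed

lemma trinomial_double_root_at:
  assumes "finite A" "consecutive A l \<beta>" "consecutive A \<beta> u"
  shows "signomial A (trinomial l \<beta> u cm ci cp) x0 = 0 \<and>
      signomial_deriv A (trinomial l \<beta> u cm ci cp) x0 = 0 \<longleftrightarrow>
    cp * exp (u * x0) + ci * exp (\<beta> * x0) + cm * exp (l * x0) = 0 \<and>
      cp * u * exp (u * x0) + ci * \<beta> * exp (\<beta> * x0) + cm * l * exp (l * x0) = 0"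
  using assms(2,3) by (simp add: consecutive_def signomial_trinomial[OF assms(1)])

section \<open>The generators span extreme rays\<close>

lemma extreme_ray_SAGE_min_monomial:
  assumes "finite A" "w \<in> A" "\<forall>a\<in>A. w \<le> a" "t > 0"
  shows "extreme_ray (SAGE_cone {0..} A) (\<lambda>a. t * (if a = w then 1 else 0))"
proof -
  let ?c = "\<lambda>a. t * (if a = w then 1 else 0)"
  have supp: "supported_on {w} ?c" by (auto simp: supported_on_def)
  then have "?c \<in> AGE_cone {0..} A w"
    using assms(2,4) by (intro AGE_cone_of_nonneg_coeffs) (auto simp: supported_on_def)
  then have "?c \<in> SAGE_cone {0..} A" using AGE_cone_subset_SAGE_cone[OF assms(1,2)] by blast
  moreover have "signomial A ?c 0 > 0"
    using signomial_supported_subset(1)[OF assms(1) _ supp, of 0] assms(2,4)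
    by (simp add: signomial_def[of "{w}"])
  ultimately show ?thesis
  proof (rule extreme_ray_SAGE_if_AGE_pieces_multiples[OF assms(1)], simp)
    fix I :: "(real \<times> bool) set" and b p i
    assume dec: "AGE_decomposition {0..} A ?c I b p" and i: "i \<in> I"
    have "p i a = 0" if "a \<noteq> w" for a
    proof (rule ccontr)
      assume pa: "p i a \<noteq> 0"
      from AGE_decomposition_support_le_pos[OF assms(1) dec i pa] have "a \<le> w"
        by (auto split: if_splits)
      with assms(3) AGE_decomposition_supported[OF dec i pa] that show False by force
    qed
    then have "p i = (\<lambda>a. (p i w / t) * ?c a)" using assms(4) by (auto simp: fun_eq_iff)
    then show "\<exists>s. p i = (\<lambda>a. s * ?c a)" by blast
  qed
qed

lemma extreme_ray_SAGE_min_binomial: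
  assumes "finite A" "consecutive A w u" "\<forall>a\<in>A. w \<le> a" "t > 0"
  shows "extreme_ray (SAGE_cone {0..} A) (\<lambda>a. t * (if a = u then 1 else if a = w then -1 else 0))"
proof -
  let ?c = "\<lambda>a. t * (if a = u then 1 else if a = w then -1 else 0)"
  from assms(2) have wu: "w \<in> A" "u \<in> A" "w < u" by (auto simp: consecutive_def)
  note sig = signomial_binomial[OF assms(1) wu(1,2) less_imp_neq[OF wu(3)]]
  have "?c \<in> SAGE_cone {0..} A"
    using AGE_cone_subset_SAGE_cone[OF assms(1) wu(1)] binomial_in_AGE_cone[OF assms(1) wu, of t] assms(4)
    by auto
  moreover have "signomial A ?c 1 > 0" using sig(1) wu(3) assms(4) by simp
  ultimately show ?thesis
  proof (rule extreme_ray_SAGE_if_AGE_pieces_multiples[OF assms(1)], simp)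
    fix I :: "(real \<times> bool) set" and b p i
    assume dec: "AGE_decomposition {0..} A ?c I b p" and i: "i \<in> I"
    have supp: "a = w \<or> a = u" if "p i a \<noteq> 0" for a
    proof -
      from AGE_decomposition_support_le_pos[OF assms(1) dec i that] have "a \<le> u"
        using wu(3) by (auto split: if_splits)
      with assms(2,3) AGE_decomposition_supported[OF dec i that] show ?thesis
        by (force simp: consecutive_def)
    qed
    then have supp2: "supported_on {u, w} (p i)" by (auto simp: supported_on_def)
    have "signomial A ?c 0 = 0" using sig(1)[of t 0] by simp
    then have "signomial A (p i) 0 = 0" using AGE_decomposition_root[OF dec _ _ i] by simp
    moreover have "signomial A (p i) 0 = p i u + p i w"
      using signomial_supported_subset(1)[OF assms(1) _ supp2, of 0] wu
      by (simp add: signomial_def[of "{u, w}"])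
    ultimately have "p i u + p i w = 0" by simp
    with supp have "p i = (\<lambda>a. (p i u / t) * ?c a)"
      using assms(4) wu(3) by (auto simp: fun_eq_iff)
    then show "\<exists>s. p i = (\<lambda>a. s * ?c a)" by blast
  qed
qed

lemma extreme_ray_SAGE_trinomial:
  assumes "finite A" "consecutive A l \<beta>" "consecutive A \<beta> u" "cp > 0" "cm > 0" "x0 \<ge> 0"
    and root: "signomial A (trinomial l \<beta> u cm ci cp) x0 = 0"
      "signomial_deriv A (trinomial l \<beta> u cm ci cp) x0 = 0"
  shows "extreme_ray (SAGE_cone {0..} A) (trinomial l \<beta> u cm ci cp)"
proof -
  let ?c = "trinomial l \<beta> u cm ci cp"
  from assms(2,3) have mem: "l \<in> A" "\<beta> \<in> A" "u \<in> A" and ord: "l < \<beta>" "\<beta> < u"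
    by (auto simp: consecutive_def)
  note s3 = signomial_trinomial[OF assms(1) mem ord]
  have "ci * exp (\<beta> * x0) < 0"
    using root(1) assms(4,5) unfolding s3 by (smt (verit) exp_gt_zero mult_pos_pos)
  then have "ci < 0" by (simp add: mult_less_0_iff)
  have "?c \<in> AGE_cone {0..} A \<beta>"
    using mem assms(4,5) root
    by (intro AGE_cone_of_double_root) (auto simp: supported_on_def trinomial_def)
  then have "?c \<in> SAGE_cone {0..} A" using AGE_cone_subset_SAGE_cone[OF assms(1) mem(2)] by blast
  moreover obtain x1 where "signomial A ?c x1 > 0" "x1 \<in> {0..}"
  proof -
    have "eventually (\<lambda>x. signomial A ?c x > 0 \<and> x \<ge> 0) at_top"
      using ord assms(4)
      by (intro eventually_conj signomial_eventually_pos[OF assms(1) mem(3)] eventually_ge_at_top)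
        (auto simp: trinomial_def)
    then show ?thesis using that by (auto simp: eventually_at_top_linorder)
  qed
  ultimately show ?thesis
  proof (rule extreme_ray_SAGE_if_AGE_pieces_multiples[OF assms(1)])
    fix I :: "(real \<times> bool) set" and b p i
    assume dec: "AGE_decomposition {0..} A ?c I b p" and i: "i \<in> I"
    note roots = AGE_decomposition_double_root[OF dec assms(6) root]
    have pos: "a = l \<or> a = u" if "?c a > 0" for a
      using that \<open>ci < 0\<close> by (auto simp: trinomial_def split: if_splits)
    have supp: "a = l \<or> a = \<beta> \<or> a = u" if "p i a \<noteq> 0" for a
    proof -
      from AGE_decomposition_support_le_pos[OF assms(1) dec i that] pos ord have "a \<le> u" by force
      moreover from AGE_decomposition_support_ge_pos[OF assms(1) dec i that roots] pos ord
      have "l \<le> a" by force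
      ultimately show ?thesis
        using assms(2,3) AGE_decomposition_supported[OF dec i that]
        by (force simp: consecutive_def)
    qed
    then have "p i = trinomial l \<beta> u (p i l) (p i \<beta>) (p i u)"
      by (auto simp: trinomial_def fun_eq_iff)
    with trinomial_double_roots_proportional[OF assms(1) mem ord _ root, of "p i l" "p i \<beta>" "p i u"]
      roots[OF i] assms(4)
    have "p i = (\<lambda>a. (p i u / cp) * ?c a)" by simp
    then show "\<exists>s. p i = (\<lambda>a. s * ?c a)" by blast
  qed
qed

lemma extreme_ray_SAGE_circuit:
  assumes "finite A" "consecutive A l \<beta>" "consecutive A \<beta> u" "cp > 0" "cm > 0" "t > 0"
    and "lam_lo l \<beta> u / lam_hi l \<beta> u \<le> cm / cp"
  shows "extreme_ray (SAGE_cone {0..} A) (\<lambda>a. t * trinomial l \<beta> u cm (circuit_coeff l \<beta> u cm cp) cp a)"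
proof -
  let ?ci = "circuit_coeff l \<beta> u cm cp"
  from assms(2,3) have ord: "l < \<beta>" "\<beta> < u" by (auto simp: consecutive_def)
  from trinomial_double_root_iff[OF ord assms(4,5), of ?ci] assms(7) obtain x0 where "x0 \<ge> 0"
    "cp * exp (u * x0) + ?ci * exp (\<beta> * x0) + cm * exp (l * x0) = 0"
    "cp * u * exp (u * x0) + ?ci * \<beta> * exp (\<beta> * x0) + cm * l * exp (l * x0) = 0"
    by blast
  then have "signomial A (trinomial l \<beta> u (t * cm) (t * ?ci) (t * cp)) x0 = 0 \<and>
      signomial_deriv A (trinomial l \<beta> u (t * cm) (t * ?ci) (t * cp)) x0 = 0"
    unfolding trinomial_double_root_at[OF assms(1-3)] by algebra
  moreover have "(\<lambda>a. t * trinomial l \<beta> u cm ?ci cp a) = trinomial l \<beta> u (t * cm) (t * ?ci) (t * cp)"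
    by (auto simp: trinomial_def)
  ultimately show ?thesis
    using extreme_ray_SAGE_trinomial[OF assms(1-3) _ _ \<open>x0 \<ge> 0\<close>] assms(4-6) by simp
qed

section \<open>Extreme AGE signomials\<close>

context
  fixes A :: "real set" and c :: "real \<Rightarrow> real" and \<beta> :: real
  assumes fin: "finite A" and ext: "extreme_ray (SAGE_cone {0..} A) c"
    and c_AGE: "c \<in> AGE_cone {0..} A \<beta>" and \<beta>_in: "\<beta> \<in> A"
begin

lemma AGE_split_summand_vanishes:
  assumes "b \<in> A" "g \<in> AGE_cone {0..} A b" "b' \<in> A" "(\<lambda>a. c a - g a) \<in> AGE_cone {0..} A b'"
    and "c z \<noteq> 0" "g z = 0"
  shows "g y = 0"
proof (rule extreme_ray_summand_vanishes[where g = g and z = z, OF ext _ _ assms(5,6)])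
  show "g \<in> SAGE_cone {0..} A" using AGE_cone_subset_SAGE_cone[OF fin assms(1)] assms(2) by blast
  show "(\<lambda>a. c a - g a) \<in> SAGE_cone {0..} A"
    using AGE_cone_subset_SAGE_cone[OF fin assms(3)] assms(4) by blast
qed

lemma extreme_AGE_nonneg_is_min_monomial:
  assumes "c \<beta> \<ge> 0"
  shows "\<exists>t>0. c = (\<lambda>a. t * (if a = Min A then 1 else 0))"
proof -
  note cd = AGE_coneD[OF c_AGE]
  have nonneg: "c a \<ge> 0" if "a \<in> A" for a using cd(2)[OF that] assms by (cases "a = \<beta>") auto
  have "c \<noteq> (\<lambda>_. 0)" using ext unfolding extreme_ray_def by blast
  then obtain z where "c z \<noteq> 0" by auto
  with cd(1) nonneg have z: "z \<in> A" "c z > 0" unfolding supported_on_def by (metis order_le_less)+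
  let ?g = "\<lambda>a. c z * (if a = z then 1 else 0)"
  have g: "?g \<in> AGE_cone {0..} A \<beta>"
    using z by (intro AGE_cone_of_nonneg_coeffs) (auto simp: supported_on_def)
  have "c w = 0" if "w \<noteq> z" for w
  proof (rule ccontr)
    assume "c w \<noteq> 0"
    have "(\<lambda>a. c a - ?g a) \<in> AGE_cone {0..} A \<beta>"
      using cd(1) nonneg by (intro AGE_cone_of_nonneg_coeffs) (auto simp: supported_on_def)
    from AGE_split_summand_vanishes[OF \<beta>_in g \<beta>_in this \<open>c w \<noteq> 0\<close>, of z] that z(2)
    show False by simp
  qed
  then have c: "c = (\<lambda>a. c z * (if a = z then 1 else 0))" by auto
  have "z = Min A"
  proof (rule ccontr)
    assume "z \<noteq> Min A"
    moreover have min: "Min A \<in> A" "Min A \<le> z" using fin z(1) by (auto intro: Min_in)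
    ultimately have lt: "Min A < z" by simp
    let ?h = "\<lambda>a. c z * (if a = Min A then 1 else 0)"
    have h: "?h \<in> AGE_cone {0..} A (Min A)"
      using min z by (intro AGE_cone_of_nonneg_coeffs) (auto simp: supported_on_def)
    have "(\<lambda>a. c a - ?h a) = (\<lambda>a. c z * (if a = z then 1 else if a = Min A then -1 else 0))"
      using lt by (subst c) auto
    with binomial_in_AGE_cone[OF fin min(1) z(1) lt, of "c z"] z(2)
    have "(\<lambda>a. c a - ?h a) \<in> AGE_cone {0..} A (Min A)" by simp
    from AGE_split_summand_vanishes[OF min(1) h min(1) this, of z "Min A"] z(2) lt show False
      by simp
  qed
  with c z(2) show ?thesis by blast
qed

lemma extreme_AGE_neg_coeff_has_root:
  assumes "c \<beta> < 0"
  shows "\<exists>x0\<ge>0. signomial A c x0 = 0"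
proof (rule ccontr)
  \<comment> \<open>otherwise subtracting \<open>m e_\<beta>\<close>, with \<open>m\<close> the minimum of \<open>c(x) exp(-\<beta> x)\<close> on \<open>[0, \<infinity>)\<close>, stays in \<open>C(A, \<beta>)\<close>\<close>
  assume no_root: "\<not> ?thesis"
  note cd = AGE_coneD[OF c_AGE]
  obtain u0 where u0: "u0 \<in> A" "u0 > \<beta>" "c u0 > 0"
    using nonneg_signomial_neg_coeff_has_pos_above[OF fin cd(1) _ cd(2) assms] cd(3) by auto
  define \<phi> where "\<phi> x = signomial A c x * exp (- \<beta> * x)" for x
  obtain x1 where x1: "x1 \<ge> 0" "\<And>y. y \<ge> 0 \<Longrightarrow> \<phi> x1 \<le> \<phi> y"
    using AGE_signomial_shifted_attains_inf[where c = c, OF fin cd(2) \<beta>_in u0] unfolding \<phi>_def by blast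
  define m where "m = \<phi> x1"
  have "signomial A c x1 > 0" using no_root cd(3) x1(1) by (metis atLeast_iff order_le_less)
  then have m_pos: "m > 0" by (simp add: m_def \<phi>_def)
  let ?g = "\<lambda>a. m * (if a = \<beta> then 1 else 0)"
  have supp_g: "supported_on {\<beta>} ?g" by (auto simp: supported_on_def)
  have g: "?g \<in> AGE_cone {0..} A \<beta>"
    using \<beta>_in m_pos by (intro AGE_cone_of_nonneg_coeffs) (auto simp: supported_on_def)
  have "(\<lambda>a. c a - ?g a) \<in> AGE_cone {0..} A \<beta>"
  proof (rule AGE_coneI)
    show "supported_on A (\<lambda>a. c a - ?g a)" using cd(1) \<beta>_in by (auto simp: supported_on_def)
    show "\<And>a. a \<in> A \<Longrightarrow> a \<noteq> \<beta> \<Longrightarrow> 0 \<le> c a - ?g a" using cd(2) by simp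
    fix x :: real assume "x \<in> {0..}"
    have "signomial A ?g x = m * exp (\<beta> * x)"
      using signomial_supported_subset(1)[OF fin _ supp_g, of x] \<beta>_in
      by (simp add: signomial_def[of "{\<beta>}"])
    then have "signomial A (\<lambda>a. c a - ?g a) x = exp (\<beta> * x) * (\<phi> x - m)"
      by (simp add: signomial_diff \<phi>_def algebra_simps exp_add[symmetric])
    also have "\<dots> \<ge> 0" using x1(2) \<open>x \<in> {0..}\<close> by (simp add: m_def)
    finally show "signomial A (\<lambda>a. c a - ?g a) x \<ge> 0" .
  qed
  from AGE_split_summand_vanishes[OF \<beta>_in g \<beta>_in this, of u0 \<beta>] u0 m_pos show False by simp
qed

lemma simple_root_no_support_below:
  assumes "c \<beta> < 0" "signomial A c 0 = 0" "signomial_deriv A c 0 > 0" "l < \<beta>"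
  shows "c l = 0"
proof (rule ccontr)
  assume "c l \<noteq> 0"
  note cd = AGE_coneD[OF c_AGE]
  obtain u0 where u0: "u0 \<in> A" "u0 > \<beta>" "c u0 > 0"
    using nonneg_signomial_neg_coeff_has_pos_above[OF fin cd(1) _ cd(2) assms(1)] cd(3) by auto
  define \<epsilon> where "\<epsilon> = min (c u0) (signomial_deriv A c 0 / (u0 - \<beta>))"
  have "\<epsilon> \<le> signomial_deriv A c 0 / (u0 - \<beta>)" by (simp add: \<epsilon>_def)
  then have "\<epsilon> * (u0 - \<beta>) \<le> signomial_deriv A c 0" using u0(2) by (simp add: pos_le_divide_eq)
  moreover have "\<epsilon> > 0" "\<epsilon> \<le> c u0" using u0 assms(3) by (simp_all add: \<epsilon>_def)
  ultimately have \<epsilon>: "\<epsilon> > 0" "\<epsilon> \<le> c u0" "\<epsilon> * (u0 - \<beta>) \<le> signomial_deriv A c 0" by simp_all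
  let ?g = "\<lambda>a. \<epsilon> * (if a = u0 then 1 else if a = \<beta> then -1 else 0)"
  note sig = signomial_binomial[OF fin \<beta>_in u0(1) less_imp_neq[OF u0(2)]]
  have g: "?g \<in> AGE_cone {0..} A \<beta>" using binomial_in_AGE_cone[OF fin \<beta>_in u0(1,2)] \<epsilon>(1) by simp
  have coeffs: "\<And>a. a \<in> A \<Longrightarrow> a \<noteq> \<beta> \<Longrightarrow> 0 \<le> c a - ?g a" using cd(2) \<epsilon>(2) by auto
  have "(\<lambda>a. c a - ?g a) \<in> AGE_cone {0..} A \<beta>"
  proof (rule AGE_coneI[OF _ coeffs])
    show "supported_on A (\<lambda>a. c a - ?g a)" using cd(1) \<beta>_in u0(1) by (auto simp: supported_on_def)
    show "signomial A (\<lambda>a. c a - ?g a) x \<ge> 0" if "x \<in> {0..}" for x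
    proof (rule AGE_signomial_nonneg_right[of A \<beta> _ 0, OF coeffs])
      show "signomial A (\<lambda>a. c a - ?g a) 0 \<ge> 0" using assms(2) by (simp add: signomial_diff sig)
      show "signomial_deriv A (\<lambda>a. c a - ?g a) 0 - \<beta> * signomial A (\<lambda>a. c a - ?g a) 0 \<ge> 0"
        using assms(2) \<epsilon>(3) by (simp add: signomial_diff signomial_deriv_diff sig algebra_simps)
    qed (use that in auto)
  qed
  from AGE_split_summand_vanishes[OF \<beta>_in g \<beta>_in this \<open>c l \<noteq> 0\<close>, of u0] assms(4) u0(2) \<epsilon>(1)
  show False by simp
qed

lemma simple_root_binomial:
  assumes "c \<beta> < 0" "signomial A c 0 = 0" "signomial_deriv A c 0 > 0"
  obtains u t where "u \<in> A" "\<beta> < u" "t > 0"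
    and "c = (\<lambda>a. t * (if a = u then 1 else if a = \<beta> then -1 else 0))"
proof -
  note cd = AGE_coneD[OF c_AGE]
  obtain u where u: "u \<in> A" "u > \<beta>" "c u > 0"
    using nonneg_signomial_neg_coeff_has_pos_above[OF fin cd(1) _ cd(2) assms(1)] cd(3) by auto
  let ?g = "\<lambda>a. c u * (if a = u then 1 else if a = \<beta> then -1 else 0)"
  note sig = signomial_binomial[OF fin \<beta>_in u(1) less_imp_neq[OF u(2)]]
  have g: "?g \<in> AGE_cone {0..} A \<beta>" using binomial_in_AGE_cone[OF fin \<beta>_in u(1,2)] u(3) by simp
  have coeffs: "\<And>a. a \<in> A \<Longrightarrow> a \<noteq> \<beta> \<Longrightarrow> 0 \<le> c a - ?g a" using cd(2) by auto
  have "(\<lambda>a. c a - ?g a) \<in> AGE_cone {0..} A \<beta>"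
  proof (rule AGE_coneI[OF _ coeffs])
    show "supported_on A (\<lambda>a. c a - ?g a)" using cd(1) \<beta>_in u(1) by (auto simp: supported_on_def)
    show "signomial A (\<lambda>a. c a - ?g a) x \<ge> 0" if "x \<in> {0..}" for x
    proof (rule AGE_signomial_nonneg_right[of A \<beta> _ 0, OF coeffs])
      show "signomial A (\<lambda>a. c a - ?g a) 0 \<ge> 0" using assms(2) by (simp add: signomial_diff sig)
      have "(c a - ?g a) * (a - \<beta>) * exp (a * 0) \<ge> 0" if "a \<in> A" for a
        using coeffs[OF that] simple_root_no_support_below[OF assms, of a]
        by (cases a \<beta> rule: linorder_cases) auto
      then show "signomial_deriv A (\<lambda>a. c a - ?g a) 0 - \<beta> * signomial A (\<lambda>a. c a - ?g a) 0 \<ge> 0"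
        unfolding signomial_deriv_minus_shift by (intro sum_nonneg) auto
    qed (use that in auto)
  qed
  note vanish = AGE_split_summand_vanishes[OF \<beta>_in g \<beta>_in this]
  have only: "c a = 0" if "a \<noteq> u" "a \<noteq> \<beta>" for a
    using vanish[of a u] that u(3) by force
  have supp: "supported_on {u, \<beta>} c" using only by (auto simp: supported_on_def)
  have "c u + c \<beta> = 0"
    using signomial_supported_subset(1)[OF fin _ supp, of 0] assms(2) u(1) \<beta>_in u(2)
    by (simp add: signomial_def[of "{u, \<beta>}"])
  with only u(2) have "c = (\<lambda>a. c u * (if a = u then 1 else if a = \<beta> then -1 else 0))"
    by (auto simp: fun_eq_iff)
  with u that show ?thesis by blast
qed

context
  fixes u t :: real
  assumes u: "u \<in> A" "\<beta> < u" "t > 0"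
    and c_binomial: "c = (\<lambda>a. t * (if a = u then 1 else if a = \<beta> then -1 else 0))"
begin

lemma binomial_no_exponent_between:
  assumes "b \<in> A" "\<beta> < b"
  shows "u \<le> b"
proof (rule ccontr)
  assume "\<not> u \<le> b"
  let ?g = "\<lambda>a. t * (if a = u then 1 else if a = b then -1 else 0)"
  have "(\<lambda>a. c a - ?g a) = (\<lambda>a. t * (if a = b then 1 else if a = \<beta> then -1 else 0))"
    using assms(2) \<open>\<not> u \<le> b\<close> by (auto simp: c_binomial)
  with binomial_in_AGE_cone[OF fin \<beta>_in assms, of t] u(3)
  have "(\<lambda>a. c a - ?g a) \<in> AGE_cone {0..} A \<beta>" by simp
  from AGE_split_summand_vanishes[OF assms(1) binomial_in_AGE_cone[OF fin assms(1) u(1), of t] \<beta>_in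
      this, of \<beta> u] assms(2) \<open>\<not> u \<le> b\<close> u(3) c_binomial
  show False by simp
qed

lemma binomial_no_exponent_below:
  assumes "l \<in> A"
  shows "\<beta> \<le> l"
proof (rule ccontr)
  assume "\<not> \<beta> \<le> l"
  then have l: "l < \<beta>" by simp
  define k where "k = t * (u - \<beta>) / (\<beta> - l)"
  have k: "k > 0" using l u unfolding k_def by simp
  let ?g = "\<lambda>a. k * (if a = \<beta> then 1 else if a = l then -1 else 0)"
  have "(\<lambda>a. c a - ?g a) = (\<lambda>a. (t / (\<beta> - l)) * circuit 0 l \<beta> u a)"
    using l u by (auto simp: c_binomial k_def circuit_def trinomial_def fun_eq_iff field_simps)
  with AGE_cone_cmult[OF circuit_in_AGE_cone[OF fin assms \<beta>_in u(1) l u(2)], of "t / (\<beta> - l)"]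
    l u(3)
  have "(\<lambda>a. c a - ?g a) \<in> AGE_cone {0..} A \<beta>" by simp
  from AGE_split_summand_vanishes[OF assms binomial_in_AGE_cone[OF fin assms \<beta>_in l, of k] \<beta>_in this,
      of u \<beta>] k l u c_binomial
  show False by simp
qed

end

lemma simple_root_min_consecutive:
  assumes "c \<beta> < 0" "signomial A c 0 = 0" "signomial_deriv A c 0 > 0"
  obtains u t where "\<beta> = Min A" "consecutive A \<beta> u" "t > 0"
    and "c = (\<lambda>a. t * (if a = u then 1 else if a = \<beta> then -1 else 0))"
proof -
  obtain u t where u: "u \<in> A" "\<beta> < u" "t > 0"
    and c: "c = (\<lambda>a. t * (if a = u then 1 else if a = \<beta> then -1 else 0))"
    using simple_root_binomial[OF assms] by blast
  note between = binomial_no_exponent_between[OF u c] and below = binomial_no_exponent_below[OF u c]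
  have "\<beta> = Min A" using fin \<beta>_in below by (intro Min_eqI[symmetric]) auto
  moreover have "consecutive A \<beta> u"
    using u between below \<beta>_in by (force simp: consecutive_def)
  ultimately show ?thesis using that u(3) c by blast
qed

context
  fixes x0 :: real
  assumes root: "signomial A c x0 = 0" "signomial_deriv A c x0 = 0"
begin

lemma double_root_circuit_split_impossible:
  assumes mem: "a \<in> A" "b \<in> A" "e \<in> A" and ord: "a < b" "b < e" and "\<theta> > 0"
    and below: "\<And>z. z \<in> A \<Longrightarrow> z \<noteq> \<beta> \<Longrightarrow> \<theta> * circuit x0 a b e z \<le> c z"
    and w: "w \<notin> {a, b, e}" "c w \<noteq> 0"
  shows False
proof -
  let ?g = "\<lambda>z. \<theta> * circuit x0 a b e z"
  note cd = AGE_coneD[OF c_AGE]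
  note circ = circuit_coeffs[OF ord, where y = x0]
  have g: "?g \<in> AGE_cone {0..} A b"
    using AGE_cone_cmult[OF circuit_in_AGE_cone[OF fin mem ord]] \<open>\<theta> > 0\<close> by simp
  have "(\<lambda>z. c z - ?g z) \<in> AGE_cone {0..} A \<beta>"
  proof (rule AGE_cone_of_double_root)
    have "circuit x0 a b e z = 0" if "z \<notin> A" for z using that mem by (intro circ(4)) auto
    then show "supported_on A (\<lambda>z. c z - ?g z)" using cd(1) by (auto simp: supported_on_def)
    show "\<And>z. z \<in> A \<Longrightarrow> z \<noteq> \<beta> \<Longrightarrow> 0 \<le> c z - ?g z" using below by simp
    show "signomial A (\<lambda>z. c z - ?g z) x0 = 0" "signomial_deriv A (\<lambda>z. c z - ?g z) x0 = 0"
      using root circuit_double_root[OF fin mem ord]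
      by (simp_all add: signomial_diff signomial_deriv_diff signomial_cmult signomial_deriv_cmult)
  qed
  from AGE_split_summand_vanishes[OF mem(2) g \<beta>_in this w(2), of a] w(1) circ(1,4) \<open>\<theta> > 0\<close>
  show False by simp
qed

context
  fixes l u :: real
  assumes l: "l \<in> A" "l < \<beta>" "c l > 0" and u: "u \<in> A" "\<beta> < u" "c u > 0"
begin

lemma double_root_support:
  assumes "w \<notin> {l, \<beta>, u}"
  shows "c w = 0"
proof (rule ccontr)
  assume "c w \<noteq> 0"
  let ?f = "circuit x0 l \<beta> u"
  note circ = circuit_coeffs[OF l(2) u(2), where y = x0]
  define \<epsilon> where "\<epsilon> = min (c u / ?f u) (c l / ?f l)"
  have \<epsilon>: "\<epsilon> > 0" "\<epsilon> * ?f u \<le> c u" "\<epsilon> * ?f l \<le> c l"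
    using circ(1,3) u(3) l(3) by (auto simp: \<epsilon>_def min_def pos_le_divide_eq field_simps)
  show False
  proof (rule double_root_circuit_split_impossible[OF l(1) \<beta>_in u(1) l(2) u(2) \<epsilon>(1) _ assms
        \<open>c w \<noteq> 0\<close>])
    fix z assume "z \<in> A" "z \<noteq> \<beta>"
    then show "\<epsilon> * ?f z \<le> c z"
      using \<epsilon> circ(4)[of z] AGE_coneD(2)[OF c_AGE, of z] by (cases "z = u \<or> z = l") auto
  qed
qed

lemma double_root_no_exponent_above:
  assumes "b \<in> A" "\<beta> < b"
  shows "u \<le> b"
proof (rule ccontr)
  assume "\<not> u \<le> b"
  with assms(2) have ord: "\<beta> < b" "b < u" by auto
  let ?f = "circuit x0 \<beta> b u"
  note circ = circuit_coeffs[OF ord, where y = x0]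
  have "c b = 0" using double_root_support[of b] assms(2) \<open>\<not> u \<le> b\<close> l(2) by auto
  have f_u: "?f u > 0" using circ(3) assms(2) \<open>\<not> u \<le> b\<close> by simp
  show False
  proof (rule double_root_circuit_split_impossible[OF \<beta>_in assms(1) u(1) _ _ _ _ _ l(3)[THEN less_imp_neq, symmetric]])
    show "\<beta> < b" "b < u" "c u / ?f u > 0" using assms(2) \<open>\<not> u \<le> b\<close> u(3) f_u by auto
    show "l \<notin> {\<beta>, b, u}" using l(2) assms(2) u(2) by auto
    fix z assume "z \<in> A" "z \<noteq> \<beta>"
    moreover have "c u / ?f u * ?f b \<le> 0"
      using f_u u(3) circ assms(2) \<open>\<not> u \<le> b\<close> by (intro mult_nonneg_nonpos) auto
    ultimately show "c u / ?f u * ?f z \<le> c z"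
      using circ(4)[of z] f_u \<open>c b = 0\<close> AGE_coneD(2)[OF c_AGE, of z] by (cases "z = u \<or> z = b") auto
  qed
qed

lemma double_root_no_exponent_below:
  assumes "b \<in> A" "b < \<beta>"
  shows "b \<le> l"
proof (rule ccontr)
  assume "\<not> b \<le> l"
  with assms(2) have ord: "l < b" "b < \<beta>" by auto
  let ?f = "circuit x0 l b \<beta>"
  note circ = circuit_coeffs[OF ord, where y = x0]
  have "c b = 0" using double_root_support[of b] assms(2) \<open>\<not> b \<le> l\<close> u(2) by auto
  have f_l: "?f l > 0" using circ(1) assms(2) \<open>\<not> b \<le> l\<close> by simp
  show False
  proof (rule double_root_circuit_split_impossible[OF l(1) assms(1) \<beta>_in _ _ _ _ _ u(3)[THEN less_imp_neq, symmetric]])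
    show "l < b" "b < \<beta>" "c l / ?f l > 0" using assms(2) \<open>\<not> b \<le> l\<close> l(3) f_l by auto
    show "u \<notin> {l, b, \<beta>}" using u(2) assms(2) l(2) by auto
    fix z assume "z \<in> A" "z \<noteq> \<beta>"
    moreover have "c l / ?f l * ?f b \<le> 0"
      using f_l l(3) circ assms(2) \<open>\<not> b \<le> l\<close> by (intro mult_nonneg_nonpos) auto
    ultimately show "c l / ?f l * ?f z \<le> c z"
      using circ(4)[of z] f_l \<open>c b = 0\<close> AGE_coneD(2)[OF c_AGE, of z] by (cases "z = l \<or> z = b") auto
  qed
qed

end

lemma double_root_trinomial:
  assumes "c \<beta> < 0"
  obtains l u where "consecutive A l \<beta>" "consecutive A \<beta> u" "c l > 0" "c u > 0"
    and "c = trinomial l \<beta> u (c l) (c \<beta>) (c u)"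
proof -
  have "c \<noteq> (\<lambda>_. 0)" using assms by auto
  note coeffs = AGE_double_root_coeffs[OF fin AGE_coneD(1,2)[OF c_AGE] root this]
  obtain l where l: "l \<in> A" "l < \<beta>" "c l > 0" using coeffs(2) by blast
  obtain u where u: "u \<in> A" "\<beta> < u" "c u > 0" using coeffs(3) by blast
  note above = double_root_no_exponent_above[OF l u] and below = double_root_no_exponent_below[OF l u]
  have "consecutive A l \<beta>" "consecutive A \<beta> u"
    using l u \<beta>_in above below by (force simp: consecutive_def)+
  moreover have "c = trinomial l \<beta> u (c l) (c \<beta>) (c u)"
    using double_root_support[OF l u] by (auto simp: trinomial_def fun_eq_iff)
  ultimately show ?thesis using that l(3) u(3) by blast
qed

end

end

section \<open>Characterisation of the extreme rays\<close>

lemma extreme_ray_SAGE_halfline_cases: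
  assumes "finite A" "extreme_ray (SAGE_cone {0..} A) c"
  obtains (monomial) t where "t > 0" "c = (\<lambda>a. t * (if a = Min A then 1 else 0))"
  | (binomial) t u where "t > 0" "consecutive A (Min A) u"
      "c = (\<lambda>a. t * (if a = u then 1 else if a = Min A then -1 else 0))"
  | (trinomial) l \<beta> u where "consecutive A l \<beta>" "consecutive A \<beta> u" "c l > 0" "c u > 0"
      "lam_lo l \<beta> u / lam_hi l \<beta> u \<le> c l / c u"
      "c = trinomial l \<beta> u (c l) (circuit_coeff l \<beta> u (c l) (c u)) (c u)"
proof -
  obtain \<beta> where \<beta>: "\<beta> \<in> A" "c \<in> AGE_cone {0..} A \<beta>"
    using extreme_ray_SAGE_in_AGE[OF assms] by blast
  note nonneg = AGE_coneD(3)[OF \<beta>(2)]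
  show ?thesis
  proof (cases "c \<beta> \<ge> 0")
    case True
    then show ?thesis using extreme_AGE_nonneg_is_min_monomial[OF assms \<beta>(2,1)] monomial by blast
  next
    case False
    then have neg: "c \<beta> < 0" by simp
    obtain x0 where x0: "x0 \<ge> 0" "signomial A c x0 = 0"
      using extreme_AGE_neg_coeff_has_root[OF assms \<beta>(2,1) neg] by blast
    have "signomial_deriv A c x0 \<ge> 0"
      using signomial_deriv_nonneg_at_left_root[OF _ x0(2)] nonneg x0(1) by simp
    then consider "signomial_deriv A c x0 > 0" | "signomial_deriv A c x0 = 0" by linarith
    then show ?thesis
    proof cases
      case 1
      with signomial_deriv_zero_at_interior_root[of A c x0] nonneg x0 have "x0 = 0" by force
      with 1 x0(2) obtain u t where "\<beta> = Min A" "consecutive A \<beta> u" "t > 0"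
        "c = (\<lambda>a. t * (if a = u then 1 else if a = \<beta> then -1 else 0))"
        using simple_root_min_consecutive[OF assms \<beta>(2,1) neg] by metis
      then show ?thesis using binomial by blast
    next
      case 2
      with x0(2) obtain l u where lu: "consecutive A l \<beta>" "consecutive A \<beta> u" "c l > 0" "c u > 0"
        and c: "c = trinomial l \<beta> u (c l) (c \<beta>) (c u)"
        using double_root_trinomial[OF assms \<beta>(2,1) x0(2) 2 neg] by metis
      from lu(1,2) have "l < \<beta>" "\<beta> < u" by (auto simp: consecutive_def)
      with trinomial_double_root_iff[OF this lu(4,3), of "c \<beta>"] x0 2
        trinomial_double_root_at[OF assms(1) lu(1,2), of "c l" "c \<beta>" "c u" x0]
      have "c \<beta> = circuit_coeff l \<beta> u (c l) (c u)" "lam_lo l \<beta> u / lam_hi l \<beta> u \<le> c l / c u"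
        by (metis c)+
      with c have "c = trinomial l \<beta> u (c l) (circuit_coeff l \<beta> u (c l) (c u)) (c u)" by metis
      with lu \<open>lam_lo l \<beta> u / lam_hi l \<beta> u \<le> c l / c u\<close> show ?thesis using trinomial by blast
    qed
  qed
qed

theorem extreme_ray_SAGE_halfline_iff:
  assumes "finite A" "A \<noteq> {}"
  shows "extreme_ray (SAGE_cone {0..} A) c \<longleftrightarrow>
    (\<exists>t>0. c = (\<lambda>a. t * (if a = Min A then 1 else 0))
      \<or> (\<exists>u. consecutive A (Min A) u \<and>
             c = (\<lambda>a. t * (if a = u then 1 else if a = Min A then -1 else 0)))
      \<or> (\<exists>l \<beta> u. consecutive A l \<beta> \<and> consecutive A \<beta> u \<and>
             (\<exists>cp cm. cp > 0 \<and> cm > 0 \<and> lam_lo l \<beta> u / lam_hi l \<beta> u \<le> cm / cp \<and>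
                c = (\<lambda>a. t * trinomial l \<beta> u cm (circuit_coeff l \<beta> u cm cp) cp a))))"
    (is "_ \<longleftrightarrow> ?generator")
proof
  assume "extreme_ray (SAGE_cone {0..} A) c"
  then show ?generator
  proof (rule extreme_ray_SAGE_halfline_cases[OF assms(1)])
    fix l \<beta> u assume lu: "consecutive A l \<beta>" "consecutive A \<beta> u" "c l > 0" "c u > 0"
      "lam_lo l \<beta> u / lam_hi l \<beta> u \<le> c l / c u"
      and "c = trinomial l \<beta> u (c l) (circuit_coeff l \<beta> u (c l) (c u)) (c u)"
    then have "c = (\<lambda>a. 1 * trinomial l \<beta> u (c l) (circuit_coeff l \<beta> u (c l) (c u)) (c u) a)"
      by simp
    with lu have "\<exists>l \<beta> u. consecutive A l \<beta> \<and> consecutive A \<beta> u \<and>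
        (\<exists>cp cm. cp > 0 \<and> cm > 0 \<and> lam_lo l \<beta> u / lam_hi l \<beta> u \<le> cm / cp \<and>
           c = (\<lambda>a. 1 * trinomial l \<beta> u cm (circuit_coeff l \<beta> u cm cp) cp a))"
      by blast
    then show ?generator by (intro exI[of _ 1]) simp
  qed blast+
next
  have min: "Min A \<in> A" "\<forall>a\<in>A. Min A \<le> a" using assms by auto
  assume ?generator
  then show "extreme_ray (SAGE_cone {0..} A) c"
    using extreme_ray_SAGE_min_monomial[OF assms(1) min] extreme_ray_SAGE_min_binomial[OF assms(1) _ min(2)]
      extreme_ray_SAGE_circuit[OF assms(1)] by blast
qed

lemma Min_image_strict_mono_on:
  fixes \<alpha> :: "nat \<Rightarrow> real"
  assumes "strict_mono_on {1..m} \<alpha>" "m \<ge> 1"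
  shows "Min (\<alpha> ` {1..m}) = \<alpha> 1"
  using assms by (intro Min_eqI) (auto intro: strict_mono_on_leD[OF assms(1)])

lemma consecutive_image_iff:
  fixes \<alpha> :: "nat \<Rightarrow> real"
  assumes "strict_mono_on {1..m} \<alpha>"
  shows "consecutive (\<alpha> ` {1..m}) a b \<longleftrightarrow> (\<exists>i. 1 \<le> i \<and> i < m \<and> a = \<alpha> i \<and> b = \<alpha> (i + 1))"
proof
  assume "consecutive (\<alpha> ` {1..m}) a b"
  then obtain i j where ij: "i \<in> {1..m}" "j \<in> {1..m}" "a = \<alpha> i" "b = \<alpha> j" "\<alpha> i < \<alpha> j"
    and gap: "\<forall>x\<in>\<alpha> ` {1..m}. x \<le> \<alpha> i \<or> \<alpha> j \<le> x"
    by (auto simp: consecutive_def)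
  have "i < j" using ij strict_mono_on_less[OF assms] by blast
  moreover have "\<not> i + 1 < j"
  proof
    assume "i + 1 < j"
    with ij have "\<alpha> i < \<alpha> (i + 1)" "\<alpha> (i + 1) < \<alpha> j" "i + 1 \<in> {1..m}"
      using strict_mono_on_less[OF assms] by auto
    with gap show False by force
  qed
  ultimately have "j = i + 1" by simp
  with ij show "\<exists>i. 1 \<le> i \<and> i < m \<and> a = \<alpha> i \<and> b = \<alpha> (i + 1)" by auto
next
  assume "\<exists>i. 1 \<le> i \<and> i < m \<and> a = \<alpha> i \<and> b = \<alpha> (i + 1)"
  then obtain i where i: "1 \<le> i" "i < m" "a = \<alpha> i" "b = \<alpha> (i + 1)" by blast
  have "x \<le> \<alpha> i \<or> \<alpha> (i + 1) \<le> x" if "x \<in> \<alpha> ` {1..m}" for x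
  proof -
    from that obtain k where k: "k \<in> {1..m}" "x = \<alpha> k" by blast
    show ?thesis
    proof (cases "k \<le> i")
      case True
      with k i show ?thesis using strict_mono_on_leD[OF assms, of k i] by auto
    next
      case False
      with k i show ?thesis using strict_mono_on_leD[OF assms, of "i + 1" k] by auto
    qed
  qed
  moreover have "\<alpha> i < \<alpha> (i + 1)" using i strict_mono_on_less[OF assms] by simp
  ultimately show "consecutive (\<alpha> ` {1..m}) a b" using i by (auto simp: consecutive_def)
qed

lemma consecutive_image_from_first_iff:
  fixes \<alpha> :: "nat \<Rightarrow> real"
  assumes "strict_mono_on {1..m} \<alpha>"
  shows "consecutive (\<alpha> ` {1..m}) (\<alpha> 1) u \<longleftrightarrow> m \<ge> 2 \<and> u = \<alpha> 2"
proof
  assume "consecutive (\<alpha> ` {1..m}) (\<alpha> 1) u"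
  then obtain i where "1 \<le> i" "i < m" "\<alpha> 1 = \<alpha> i" "u = \<alpha> (i + 1)"
    unfolding consecutive_image_iff[OF assms] by blast
  moreover from this have "i = 1" using strict_mono_on_eqD[OF assms, of 1 i] by simp
  ultimately show "m \<ge> 2 \<and> u = \<alpha> 2" by (simp add: numeral_2_eq_2)
next
  assume "m \<ge> 2 \<and> u = \<alpha> 2"
  then show "consecutive (\<alpha> ` {1..m}) (\<alpha> 1) u" unfolding consecutive_image_iff[OF assms]
    by (intro exI[of _ 1]) (simp add: numeral_2_eq_2)
qed

lemma consecutive_image_pair_iff:
  fixes \<alpha> :: "nat \<Rightarrow> real"
  assumes "strict_mono_on {1..m} \<alpha>"
  shows "(\<exists>l \<beta> u. consecutive (\<alpha> ` {1..m}) l \<beta> \<and> consecutive (\<alpha> ` {1..m}) \<beta> u \<and> P l \<beta> u) \<longleftrightarrow>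
    (\<exists>i. 2 \<le> i \<and> i \<le> m - 1 \<and> P (\<alpha> (i - 1)) (\<alpha> i) (\<alpha> (i + 1)))"
  (is "(\<exists>l \<beta> u. ?consec l \<beta> \<and> ?consec \<beta> u \<and> _) \<longleftrightarrow> _")
proof
  assume "\<exists>l \<beta> u. ?consec l \<beta> \<and> ?consec \<beta> u \<and> P l \<beta> u"
  then obtain l \<beta> u where "?consec l \<beta>" "?consec \<beta> u" "P l \<beta> u" by blast
  then obtain i j where "1 \<le> i" "i < m" "1 \<le> j" "j < m" "\<alpha> (i + 1) = \<alpha> j"
    "P (\<alpha> i) (\<alpha> j) (\<alpha> (j + 1))" unfolding consecutive_image_iff[OF assms] by metis
  moreover from this have "j = i + 1" using strict_mono_on_eqD[OF assms, of "i + 1" j] by simp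
  ultimately show "\<exists>i. 2 \<le> i \<and> i \<le> m - 1 \<and> P (\<alpha> (i - 1)) (\<alpha> i) (\<alpha> (i + 1))"
    by (intro exI[of _ j]) auto
next
  assume "\<exists>i. 2 \<le> i \<and> i \<le> m - 1 \<and> P (\<alpha> (i - 1)) (\<alpha> i) (\<alpha> (i + 1))"
  then obtain i where i: "2 \<le> i" "i \<le> m - 1" "P (\<alpha> (i - 1)) (\<alpha> i) (\<alpha> (i + 1))" by blast
  have "?consec (\<alpha> (i - 1)) (\<alpha> i)"
    unfolding consecutive_image_iff[OF assms] using i by (intro exI[of _ "i - 1"]) auto
  moreover have "?consec (\<alpha> i) (\<alpha> (i + 1))"
    unfolding consecutive_image_iff[OF assms] using i by (intro exI[of _ i]) auto
  ultimately show "\<exists>l \<beta> u. ?consec l \<beta> \<and> ?consec \<beta> u \<and> P l \<beta> u" using i(3) by blast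
qed

theorem proposition6p1:
  fixes \<alpha> :: "nat \<Rightarrow> real" and m :: nat
  assumes "m \<ge> 1"
    and "\<And>i j. 1 \<le> i \<Longrightarrow> i < j \<Longrightarrow> j \<le> m \<Longrightarrow> \<alpha> i < \<alpha> j"
  shows "extreme_ray (SAGE_cone {0..} (\<alpha> ` {1..m})) c \<longleftrightarrow>
    (\<exists>t>0.
       c = (\<lambda>a. t * (if a = \<alpha> 1 then 1 else 0))
     \<or> (m \<ge> 2 \<and> c = (\<lambda>a. t * (if a = \<alpha> 2 then 1 else if a = \<alpha> 1 then -1 else 0)))
     \<or> (\<exists>i cp cm. 2 \<le> i \<and> i \<le> m - 1 \<and> cp > 0 \<and> cm > 0 \<and>
          (let lp = (\<alpha> i - \<alpha> (i - 1)) / (\<alpha> (i + 1) - \<alpha> (i - 1));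
               lm = (\<alpha> (i + 1) - \<alpha> i) / (\<alpha> (i + 1) - \<alpha> (i - 1));
               ci = - ((cm / lm) powr lm * (cp / lp) powr lp)
           in cm / cp \<ge> lm / lp \<and>
              c = (\<lambda>a. t * (if a = \<alpha> (i + 1) then cp else if a = \<alpha> i then ci
                             else if a = \<alpha> (i - 1) then cm else 0)))))"
proof -
  have mono: "strict_mono_on {1..m} \<alpha>" using assms(2) by (intro strict_mono_onI) auto
  have "finite (\<alpha> ` {1..m})" "\<alpha> ` {1..m} \<noteq> {}" using assms(1) by auto
  from extreme_ray_SAGE_halfline_iff[OF this, of c] show ?thesis
    unfolding Min_image_strict_mono_on[OF mono assms(1)] consecutive_image_from_first_iff[OF mono]
      consecutive_image_pair_iff[OF mono] Let_def lam_lo_def lam_hi_def circuit_coeff_def trinomial_def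
    by blast
qed
end
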